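(* Let $n\ge2$. There exists a set $T$ of partitions of $n$ with $(1^n)\in T$ such that the Schur function $s_{(n-1,1)}$ appears with negative coefficient in $\psi_T=\sum_{\mu\in T}p_\mu$ if and only if $n\ge10$. There exists a set $T$ of partitions of $n$ with $(1^n)\in T$ such that $s_{(2,1^{n-2})}$ appears with negative coefficient in $\psi_T$ if and only if $n\ge6$.
   Context: $p_\mu=\prod_ip_{\mu_i}$ denotes power sums; coefficients refer to the expansion in the Schur function basis. *)

theory Defs
  imports Main
begin

definition is_partition :: "nat \<Rightarrow> nat list \<Rightarrow> bool" where
  "is_partition n la \<longleftrightarrow> sorted (rev la) \<and> (\<forall>x\<in>set la. 0 < x) \<and> sum_list la = n"

definition partitions :: "nat \<Rightarrow> nat list set" where
  "partitions n = {la. is_partition n la}"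

text \<open>Symmetric functions of degree n are represented by the corresponding
  symmetric polynomials in the N = n variables x_0,...,x_{N-1}; a polynomial is
  given by its coefficient function on exponent vectors (nat \<Rightarrow> nat).
  (In degree n, with n variables, restriction from the ring of symmetric
  functions is injective, so Schur coefficients are unchanged.)\<close>

text \<open>Coefficient of x^alpha in p_mu = prod_j (sum_{i<N} x_i^{mu_j}):
  number of ways to choose a variable index for each part.\<close>
definition pcoeff :: "nat \<Rightarrow> nat list \<Rightarrow> (nat \<Rightarrow> nat) \<Rightarrow> int" where
  "pcoeff N \<mu> \<alpha> = int (card {f :: nat \<Rightarrow> nat.
      (\<forall>j. j < length \<mu> \<longrightarrow> f j < N) \<and> (\<forall>j. length \<mu> \<le> j \<longrightarrow> f j = 0) \<and>
      (\<forall>i. (\<Sum>j | j < length \<mu> \<and> f j = i. \<mu> ! j) = \<alpha> i)})"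

definition cells :: "nat list \<Rightarrow> (nat \<times> nat) set" where
  "cells la = {(i, j). i < length la \<and> j < la ! i}"

definition ssyt :: "nat \<Rightarrow> nat list \<Rightarrow> (nat \<times> nat \<Rightarrow> nat) set" where
  "ssyt N la = {T. (\<forall>c\<in>cells la. T c < N) \<and> (\<forall>c. c \<notin> cells la \<longrightarrow> T c = 0) \<and>
      (\<forall>i j. (i, Suc j) \<in> cells la \<longrightarrow> T (i, j) \<le> T (i, Suc j)) \<and>
      (\<forall>i j. (Suc i, j) \<in> cells la \<longrightarrow> T (i, j) < T (Suc i, j))}"

text \<open>Coefficient of x^alpha in the Schur polynomial s_lambda(x_0..x_{N-1})
  (Kostka number).\<close>
definition scoeff :: "nat \<Rightarrow> nat list \<Rightarrow> (nat \<Rightarrow> nat) \<Rightarrow> int" where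
  "scoeff N la \<alpha> = int (card {T \<in> ssyt N la. \<forall>i. card {c \<in> cells la. T c = i} = \<alpha> i})"

definition psi :: "nat \<Rightarrow> nat list set \<Rightarrow> (nat \<Rightarrow> nat) \<Rightarrow> int" where
  "psi n T \<alpha> = (\<Sum>\<mu>\<in>T. pcoeff n \<mu> \<alpha>)"

definition schur_coeff :: "nat \<Rightarrow> ((nat \<Rightarrow> nat) \<Rightarrow> int) \<Rightarrow> nat list \<Rightarrow> int" where
  "schur_coeff n f la = (THE c. (\<forall>\<mu>. \<mu> \<notin> partitions n \<longrightarrow> c \<mu> = 0) \<and>
      (\<forall>\<alpha>. f \<alpha> = (\<Sum>\<mu>\<in>partitions n. c \<mu> * scoeff n \<mu> \<alpha>))) la"

end

theory Submission
  imports Defs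
begin

text \<open>
  The coefficient of a Schur polynomial \<open>s\<^sub>\<lambda>\<close> in a symmetric polynomial \<open>f\<close> can be read off by a
  linear functional on the monomial coefficients of \<open>f\<close> that is \<open>1\<close> on \<open>s\<^sub>\<lambda>\<close> and \<open>0\<close> on all
  other Schur polynomials.  For \<open>\<lambda> = (n-1,1)\<close> this is \<open>f \<mapsto> [x\<^sup>(\<^sup>n\<^sup>-\<^sup>1\<^sup>,\<^sup>1\<^sup>)] f - [x\<^sup>(\<^sup>n\<^sup>)] f\<close>, because
  \<open>x\<^sup>(\<^sup>n\<^sup>-\<^sup>1\<^sup>,\<^sup>1\<^sup>)\<close> occurs only in \<open>s\<^sub>(\<^sub>n\<^sub>)\<close> and \<open>s\<^sub>(\<^sub>n\<^sub>-\<^sub>1\<^sub>,\<^sub>1\<^sub>)\<close>, once each.  For \<open>\<lambda> = (2,1\<^sup>n\<^sup>-\<^sup>2)\<close> it is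
  an alternating sum over compositions \<open>\<alpha>\<close>: peeling off the last entry of \<open>\<alpha>\<close> removes a horizontal
  strip, and by induction \<open>\<Sum>\<^sub>\<alpha> (-1)\<^sup>\<ell>\<^sup>(\<^sup>\<alpha>\<^sup>) K\<^sub>\<lambda>\<^sub>\<alpha>\<close> is \<open>(-1)\<^sup>|\<^sup>\<lambda>\<^sup>|\<close> for a single column \<open>\<lambda>\<close>
  and \<open>0\<close> otherwise.  The same peeling argument evaluates both functionals on \<open>p\<^sub>\<mu>\<close>: they give
  \<open>m\<^sub>1(\<mu>) - 1\<close> and \<open>(-1)\<^sup>n\<^sup>-\<^sup>\<ell>\<^sup>(\<^sup>\<mu>\<^sup>) (m\<^sub>1(\<mu>) - 1)\<close>, where \<open>m\<^sub>1(\<mu>)\<close> is the number of parts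
  equal to \<open>1\<close>.  Since \<open>(1\<^sup>n)\<close> contributes \<open>n - 1\<close>, a negative coefficient needs more than \<open>n - 1\<close>
  worth of negative contributions: for \<open>(n-1,1)\<close> these are the partitions without a part \<open>1\<close>,
  which are too few for \<open>n \<le> 9\<close> (a finite enumeration) and enough for \<open>n \<ge> 10\<close> (an explicit
  family); for \<open>(2,1\<^sup>n\<^sup>-\<^sup>2)\<close> an enumeration settles \<open>n \<le> 5\<close> and four partitions suffice for
  \<open>n \<ge> 6\<close>.

  Because \<^const>\<open>schur_coeff\<close> is defined by a definite description, the Schur expansion must also
  be shown to exist and be unique: the Kostka matrix is unitriangular for dominance order, and
  Schur polynomials are symmetric by the Bender--Knuth involution.
\<close>

section \<open>Tableaux and chains of horizontal strips\<close>

definition vec_of_list :: "nat list \<Rightarrow> nat \<Rightarrow> nat" where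
  "vec_of_list xs i = (if i < length xs then xs ! i else 0)"

definition psum :: "nat \<Rightarrow> (nat \<Rightarrow> nat) \<Rightarrow> nat" where
  "psum k \<alpha> = (\<Sum>i<k. \<alpha> i)"

definition is_shape :: "nat \<Rightarrow> (nat \<Rightarrow> nat) \<Rightarrow> bool" where
  "is_shape N lam \<longleftrightarrow> (\<forall>i. lam (Suc i) \<le> lam i) \<and> (\<forall>i. N \<le> i \<longrightarrow> lam i = 0)"

definition diagram :: "(nat \<Rightarrow> nat) \<Rightarrow> (nat \<times> nat) set" where
  "diagram lam = {(i, j). j < lam i}"

definition tableaux :: "nat \<Rightarrow> (nat \<Rightarrow> nat) \<Rightarrow> (nat \<times> nat \<Rightarrow> nat) set" where
  "tableaux N lam = {T. (\<forall>c\<in>diagram lam. T c < N) \<and> (\<forall>c. c \<notin> diagram lam \<longrightarrow> T c = 0) \<and>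
      (\<forall>i j. (i, Suc j) \<in> diagram lam \<longrightarrow> T (i, j) \<le> T (i, Suc j)) \<and>
      (\<forall>i j. (Suc i, j) \<in> diagram lam \<longrightarrow> T (i, j) < T (Suc i, j))}"

definition kostka :: "nat \<Rightarrow> (nat \<Rightarrow> nat) \<Rightarrow> (nat \<Rightarrow> nat) \<Rightarrow> nat" where
  "kostka N lam \<alpha> = card {T \<in> tableaux N lam. \<forall>i. card {c \<in> diagram lam. T c = i} = \<alpha> i}"

lemma cells_eq_diagram: "cells xs = diagram (vec_of_list xs)"
  unfolding cells_def diagram_def vec_of_list_def by (auto split: if_splits)

lemma scoeff_eq_kostka: "scoeff N xs \<alpha> = int (kostka N (vec_of_list xs) \<alpha>)"
  unfolding scoeff_def kostka_def ssyt_def tableaux_def cells_eq_diagram ..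

lemma tableaux_lt: "T \<in> tableaux N lam \<Longrightarrow> j < lam i \<Longrightarrow> T (i, j) < N"
  unfolding tableaux_def diagram_def by auto

lemma tableaux_outside: "T \<in> tableaux N lam \<Longrightarrow> \<not> j < lam i \<Longrightarrow> T (i, j) = 0"
  unfolding tableaux_def diagram_def by auto

lemma tableaux_col: "T \<in> tableaux N lam \<Longrightarrow> j < lam (Suc i) \<Longrightarrow> T (i, j) < T (Suc i, j)"
  unfolding tableaux_def diagram_def by auto

lemma tableaux_row_mono:
  assumes "T \<in> tableaux N lam" "j \<le> j'" "j' < lam i"
  shows "T (i, j) \<le> T (i, j')"
  using assms(2,3)
proof (induction j' rule: dec_induct)
  case (step m)
  then have "T (i, m) \<le> T (i, Suc m)" using assms(1) unfolding tableaux_def diagram_def by auto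
  with step show ?case by simp
qed simp

text \<open>
  A tableau of shape \<open>lam\<close> with entries below \<open>N\<close> is encoded by the chain of shapes
  \<open>G k\<close> = cells with entry \<open>< k\<close>; consecutive shapes differ by horizontal strips
  (a Gelfand--Tsetlin pattern).
\<close>

definition horiz_strip :: "(nat \<Rightarrow> nat) \<Rightarrow> (nat \<Rightarrow> nat) \<Rightarrow> bool" where
  "horiz_strip \<rho> \<sigma> \<longleftrightarrow> (\<forall>i. \<sigma> (Suc i) \<le> \<rho> i \<and> \<rho> i \<le> \<sigma> i)"

definition strip_chains :: "nat \<Rightarrow> (nat \<Rightarrow> nat) \<Rightarrow> (nat \<Rightarrow> nat) \<Rightarrow> (nat \<Rightarrow> nat \<Rightarrow> nat) set" where
  "strip_chains N lam \<alpha> = {G. G 0 = (\<lambda>i. 0) \<and> (\<forall>k. N \<le> k \<longrightarrow> G k = lam) \<and>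
     (\<forall>k<N. horiz_strip (G k) (G (Suc k))) \<and> (\<forall>k. \<alpha> k = psum N (G (Suc k)) - psum N (G k))}"

definition tableau_chain :: "(nat \<Rightarrow> nat) \<Rightarrow> (nat \<times> nat \<Rightarrow> nat) \<Rightarrow> nat \<Rightarrow> nat \<Rightarrow> nat" where
  "tableau_chain lam T k i = card {j. j < lam i \<and> T (i, j) < k}"

definition chain_tableau :: "(nat \<Rightarrow> nat) \<Rightarrow> (nat \<Rightarrow> nat \<Rightarrow> nat) \<Rightarrow> nat \<times> nat \<Rightarrow> nat" where
  "chain_tableau lam G c = (if snd c < lam (fst c) then (LEAST k. snd c < G (Suc k) (fst c)) else 0)"

lemma downward_closed_eq_lessThan:
  fixes S :: "nat set"
  assumes "finite S" "\<And>j j0. j \<in> S \<Longrightarrow> j0 \<le> j \<Longrightarrow> j0 \<in> S"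
  shows "S = {..<card S}"
proof (cases "S = {}")
  case False
  have "S = {..Max S}"
    using assms False by (auto intro: Max_ge Max_in)
  then show ?thesis by (metis card_lessThan lessThan_Suc_atMost)
qed simp

lemma tableau_chain_prefix:
  assumes "T \<in> tableaux N lam"
  shows "{j. j < lam i \<and> T (i, j) < k} = {..<tableau_chain lam T k i}"
  unfolding tableau_chain_def
proof (rule downward_closed_eq_lessThan)
  fix j j0 assume "j \<in> {j. j < lam i \<and> T (i, j) < k}" "j0 \<le> j"
  then show "j0 \<in> {j. j < lam i \<and> T (i, j) < k}"
    using tableaux_row_mono[OF assms, of j0 j i] by auto
qed simp

lemma tableau_chain_iff:
  assumes "T \<in> tableaux N lam" "j < lam i"
  shows "T (i, j) < k \<longleftrightarrow> j < tableau_chain lam T k i"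
  using tableau_chain_prefix[OF assms(1), of i k] assms(2)
  by (metis (mono_tags, lifting) lessThan_iff mem_Collect_eq)

lemma tableau_chain_le: "tableau_chain lam T k i \<le> lam i"
  unfolding tableau_chain_def by (rule order_trans[OF card_mono[of "{..<lam i}"]]) auto

lemma tableau_chain_mono: "tableau_chain lam T k i \<le> tableau_chain lam T (Suc k) i"
  unfolding tableau_chain_def by (rule card_mono) auto

lemma tableau_chain_final:
  assumes "T \<in> tableaux N lam" "N \<le> k"
  shows "tableau_chain lam T k = lam"
proof
  fix i
  have "{j. j < lam i \<and> T (i, j) < k} = {..<lam i}"
    using tableaux_lt[OF assms(1)] assms(2) by (auto intro: less_le_trans)
  then show "tableau_chain lam T k i = lam i" unfolding tableau_chain_def by simp
qed

lemma tableau_chain_interlace: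
  assumes "T \<in> tableaux N lam" "is_shape N lam"
  shows "tableau_chain lam T (Suc k) (Suc i) \<le> tableau_chain lam T k i"
proof -
  have "{..<tableau_chain lam T (Suc k) (Suc i)} \<subseteq> {..<tableau_chain lam T k i}"
  proof (rule subsetI)
    fix j assume "j \<in> {..<tableau_chain lam T (Suc k) (Suc i)}"
    then have j: "j < lam (Suc i)" "T (Suc i, j) < Suc k"
      using tableau_chain_prefix[OF assms(1), of "Suc i" "Suc k"] by auto
    have "lam (Suc i) \<le> lam i" using assms(2) unfolding is_shape_def by auto
    with j have "j < lam i" by simp
    moreover have "T (i, j) < k" using tableaux_col[OF assms(1) j(1)] j(2) by simp
    ultimately show "j \<in> {..<tableau_chain lam T k i}"
      using tableau_chain_iff[OF assms(1), of j i k] by simp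
  qed
  then show ?thesis by simp
qed

lemma tableau_chain_content:
  assumes "T \<in> tableaux N lam" "is_shape N lam"
  shows "card {c \<in> diagram lam. T c = k} = psum N (tableau_chain lam T (Suc k)) - psum N (tableau_chain lam T k)"
proof -
  let ?G = "tableau_chain lam T"
  have row: "j < lam i \<and> T (i, j) = k \<longleftrightarrow> ?G k i \<le> j \<and> j < ?G (Suc k) i" for i j
    using tableau_chain_iff[OF assms(1), of j i k] tableau_chain_iff[OF assms(1), of j i "Suc k"]
      tableau_chain_le[of lam T "Suc k" i] by auto
  have "i < N" if "j < lam i" for i j
    using that assms(2) unfolding is_shape_def by (metis not_less0 not_le)
  then have "{c \<in> diagram lam. T c = k} = Sigma {..<N} (\<lambda>i. {?G k i..<?G (Suc k) i})"
    unfolding diagram_def using row by fastforce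
  then have "card {c \<in> diagram lam. T c = k} = (\<Sum>i<N. ?G (Suc k) i - ?G k i)"
    by (simp add: card_SigmaI)
  also have "\<dots> = psum N (?G (Suc k)) - psum N (?G k)"
    unfolding psum_def by (rule sum_subtractf_nat) (rule tableau_chain_mono)
  finally show ?thesis .
qed

lemma tableau_chain_in_strip_chains:
  assumes "T \<in> tableaux N lam" "is_shape N lam" "\<forall>i. card {c \<in> diagram lam. T c = i} = \<alpha> i"
  shows "tableau_chain lam T \<in> strip_chains N lam \<alpha>"
  unfolding strip_chains_def horiz_strip_def
  using tableau_chain_final[OF assms(1)] tableau_chain_mono tableau_chain_interlace[OF assms(1,2)]
    tableau_chain_content[OF assms(1,2)] assms(3)
  by (auto simp: tableau_chain_def)

lemma strip_chain_mono_Suc: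
  assumes "G \<in> strip_chains N lam \<alpha>"
  shows "G k i \<le> G (Suc k) i"
proof (cases "k < N")
  case True then show ?thesis using assms unfolding strip_chains_def horiz_strip_def by auto
next
  case False then show ?thesis using assms unfolding strip_chains_def by auto
qed

lemma strip_chain_mono:
  assumes "G \<in> strip_chains N lam \<alpha>" "k \<le> k'"
  shows "G k i \<le> G k' i"
  using assms(2)
proof (induction k' rule: dec_induct)
  case base then show ?case by simp
next
  case (step m) then show ?case using strip_chain_mono_Suc[OF assms(1), of m i] by simp
qed

lemma strip_chain_final: "G \<in> strip_chains N lam \<alpha> \<Longrightarrow> N \<le> k \<Longrightarrow> G k = lam"
  unfolding strip_chains_def by auto

lemma strip_chain_0: "G \<in> strip_chains N lam \<alpha> \<Longrightarrow> G 0 = (\<lambda>i. 0)"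
  unfolding strip_chains_def by auto

lemma strip_chain_step: "G \<in> strip_chains N lam \<alpha> \<Longrightarrow> k < N \<Longrightarrow> horiz_strip (G k) (G (Suc k))"
  unfolding strip_chains_def by auto

lemma strip_chain_content: "G \<in> strip_chains N lam \<alpha> \<Longrightarrow> \<alpha> k = psum N (G (Suc k)) - psum N (G k)"
  unfolding strip_chains_def by auto

lemma strip_chain_le:
  assumes "G \<in> strip_chains N lam \<alpha>"
  shows "G k i \<le> lam i"
  using strip_chain_mono[OF assms, of k "max k N" i] strip_chain_final[OF assms, of "max k N"] by simp

lemma chain_tableau_less_iff:
  assumes "G \<in> strip_chains N lam \<alpha>" "j < lam i"
  shows "chain_tableau lam G (i, j) < k \<longleftrightarrow> j < G k i"
proof -
  have ex: "\<exists>k. j < G (Suc k) i"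
    using strip_chain_final[OF assms(1), of "Suc N"] assms(2) by auto
  show ?thesis
  proof
    assume "chain_tableau lam G (i, j) < k"
    then have "(LEAST k. j < G (Suc k) i) < k" using assms(2) unfolding chain_tableau_def by simp
    moreover have "j < G (Suc (LEAST k. j < G (Suc k) i)) i" using LeastI_ex[OF ex] .
    ultimately show "j < G k i" using strip_chain_mono[OF assms(1), of "Suc (LEAST k. j < G (Suc k) i)" k i] by simp
  next
    assume h: "j < G k i"
    then obtain k' where k': "k = Suc k'" using strip_chain_0[OF assms(1)] by (cases k) auto
    then have "(LEAST k. j < G (Suc k) i) \<le> k'" using h by (intro Least_le) simp
    then show "chain_tableau lam G (i, j) < k" using assms(2) k' unfolding chain_tableau_def by simp
  qed
qed

lemma chain_tableau_in_tableaux: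
  assumes "G \<in> strip_chains N lam \<alpha>" "is_shape N lam"
  shows "chain_tableau lam G \<in> tableaux N lam"
  unfolding tableaux_def
proof (intro CollectI conjI allI ballI impI)
  fix c assume "c \<in> diagram lam"
  then obtain i j where c: "c = (i, j)" "j < lam i" unfolding diagram_def by auto
  then show "chain_tableau lam G c < N" using chain_tableau_less_iff[OF assms(1) c(2), of N] strip_chain_final[OF assms(1), of N] by simp
next
  fix c assume "c \<notin> diagram lam"
  then show "chain_tableau lam G c = 0" unfolding diagram_def chain_tableau_def by (cases c) auto
next
  fix i j assume "(i, Suc j) \<in> diagram lam"
  then have h: "Suc j < lam i" unfolding diagram_def by auto
  let ?t = "chain_tableau lam G (i, Suc j)"
  have "Suc j < G (Suc ?t) i" using chain_tableau_less_iff[OF assms(1) h, of "Suc ?t"] by simp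
  then have "j < G (Suc ?t) i" by simp
  then show "chain_tableau lam G (i, j) \<le> ?t" using chain_tableau_less_iff[OF assms(1), of j i "Suc ?t"] h by simp
next
  fix i j assume "(Suc i, j) \<in> diagram lam"
  then have h: "j < lam (Suc i)" unfolding diagram_def by auto
  have bk_hi: "j < lam i" using h assms(2) unfolding is_shape_def by (metis less_le_trans)
  let ?t = "chain_tableau lam G (Suc i, j)"
  have t: "?t < N" using chain_tableau_less_iff[OF assms(1) h, of N] strip_chain_final[OF assms(1), of N] h by simp
  have "j < G (Suc ?t) (Suc i)" using chain_tableau_less_iff[OF assms(1) h, of "Suc ?t"] by simp
  also have "\<dots> \<le> G ?t i" using strip_chain_step[OF assms(1) t] unfolding horiz_strip_def by auto
  finally show "chain_tableau lam G (i, j) < ?t" using chain_tableau_less_iff[OF assms(1) bk_hi] by simp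
qed

lemma tableau_chain_chain_tableau:
  assumes "G \<in> strip_chains N lam \<alpha>" "is_shape N lam"
  shows "tableau_chain lam (chain_tableau lam G) = G"
proof (intro ext)
  fix k i
  have "{j. j < lam i \<and> chain_tableau lam G (i, j) < k} = {..<G k i}"
    using chain_tableau_less_iff[OF assms(1)] strip_chain_le[OF assms(1), of k i] by auto
  then show "tableau_chain lam (chain_tableau lam G) k i = G k i" unfolding tableau_chain_def by simp
qed

lemma chain_tableau_tableau_chain:
  assumes "T \<in> tableaux N lam" "is_shape N lam"
  shows "chain_tableau lam (tableau_chain lam T) = T"
proof (intro ext, clarify)
  fix i j
  have ch: "tableau_chain lam T \<in> strip_chains N lam (\<lambda>k. card {c \<in> diagram lam. T c = k})"
    using tableau_chain_in_strip_chains[OF assms] by simp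
  show "chain_tableau lam (tableau_chain lam T) (i, j) = T (i, j)"
  proof (cases "j < lam i")
    case True
    have "\<forall>k. chain_tableau lam (tableau_chain lam T) (i, j) < k \<longleftrightarrow> T (i, j) < k"
      using chain_tableau_less_iff[OF ch True] tableau_chain_iff[OF assms(1) True] by simp
    then show ?thesis by (metis lessI less_not_refl2 linorder_neqE_nat)
  next
    case False
    then show ?thesis using tableaux_outside[OF assms(1) False] unfolding chain_tableau_def by simp
  qed
qed

lemma kostka_eq_card_strip_chains:
  assumes "is_shape N lam"
  shows "kostka N lam \<alpha> = card (strip_chains N lam \<alpha>)"
  unfolding kostka_def
proof (rule bij_betw_same_card[of "tableau_chain lam"], rule bij_betw_byWitness[where f' = "chain_tableau lam"])
  show "\<forall>a\<in>{T \<in> tableaux N lam. \<forall>i. card {c \<in> diagram lam. T c = i} = \<alpha> i}. chain_tableau lam (tableau_chain lam a) = a"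
    using chain_tableau_tableau_chain[OF _ assms] by auto
  show "\<forall>a'\<in>strip_chains N lam \<alpha>. tableau_chain lam (chain_tableau lam a') = a'"
    using tableau_chain_chain_tableau[OF _ assms] by auto
  show "tableau_chain lam ` {T \<in> tableaux N lam. \<forall>i. card {c \<in> diagram lam. T c = i} = \<alpha> i} \<subseteq> strip_chains N lam \<alpha>"
    using tableau_chain_in_strip_chains[OF _ assms] by auto
  show "chain_tableau lam ` strip_chains N lam \<alpha> \<subseteq> {T \<in> tableaux N lam. \<forall>i. card {c \<in> diagram lam. T c = i} = \<alpha> i}"
  proof (rule image_subsetI)
    fix G assume G: "G \<in> strip_chains N lam \<alpha>"
    have T: "chain_tableau lam G \<in> tableaux N lam" by (rule chain_tableau_in_tableaux[OF G assms])
    moreover have "\<forall>i. card {c \<in> diagram lam. chain_tableau lam G c = i} = \<alpha> i"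
      using tableau_chain_content[OF T assms] tableau_chain_chain_tableau[OF G assms] strip_chain_content[OF G] by simp
    ultimately show "chain_tableau lam G \<in> {T \<in> tableaux N lam. \<forall>i. card {c \<in> diagram lam. T c = i} = \<alpha> i}" by simp
  qed
qed



section \<open>Symmetry of Kostka numbers\<close>

definition adj_swap :: "nat \<Rightarrow> (nat \<Rightarrow> nat) \<Rightarrow> nat \<Rightarrow> nat" where
  "adj_swap k \<alpha> = \<alpha>(k := \<alpha> (Suc k), Suc k := \<alpha> k)"

lemma adj_swap_adj_swap [simp]: "adj_swap k (adj_swap k \<alpha>) = \<alpha>"
  unfolding adj_swap_def by (auto simp: fun_eq_iff)

text \<open>
  Bender--Knuth: given the outer shapes \<open>l \<subseteq> c\<close>, the middle shape \<open>m\<close> of two consecutive horizontal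
  strips ranges row by row over an interval \<open>[bk_lo l c i, bk_hi l c i]\<close>; reflecting \<open>m\<close> in
  these intervals swaps the sizes of the two strips.
\<close>

definition bk_lo :: "(nat \<Rightarrow> nat) \<Rightarrow> (nat \<Rightarrow> nat) \<Rightarrow> nat \<Rightarrow> nat" where
  "bk_lo l c i = max (l i) (c (Suc i))"

definition bk_hi :: "(nat \<Rightarrow> nat) \<Rightarrow> (nat \<Rightarrow> nat) \<Rightarrow> nat \<Rightarrow> nat" where
  "bk_hi l c i = (if i = 0 then c 0 else min (c i) (l (i - 1)))"

definition bk_flip :: "(nat \<Rightarrow> nat) \<Rightarrow> (nat \<Rightarrow> nat) \<Rightarrow> (nat \<Rightarrow> nat) \<Rightarrow> nat \<Rightarrow> nat" where
  "bk_flip l c m = (\<lambda>i. bk_lo l c i + bk_hi l c i - m i)"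

definition bender_knuth :: "nat \<Rightarrow> (nat \<Rightarrow> nat \<Rightarrow> nat) \<Rightarrow> nat \<Rightarrow> nat \<Rightarrow> nat" where
  "bender_knuth k G = G(Suc k := bk_flip (G k) (G (Suc (Suc k))) (G (Suc k)))"

lemma horiz_strip_pair_iff_bk_bounds:
  "(horiz_strip l m \<and> horiz_strip m c) \<longleftrightarrow> (\<forall>i. bk_lo l c i \<le> m i \<and> m i \<le> bk_hi l c i)"
proof
  assume h: "horiz_strip l m \<and> horiz_strip m c"
  show "\<forall>i. bk_lo l c i \<le> m i \<and> m i \<le> bk_hi l c i"
  proof
    fix i show "bk_lo l c i \<le> m i \<and> m i \<le> bk_hi l c i"
      using h unfolding horiz_strip_def bk_lo_def bk_hi_def by (cases i) auto
  qed
next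
  assume h: "\<forall>i. bk_lo l c i \<le> m i \<and> m i \<le> bk_hi l c i"
  have "m (Suc i) \<le> l i" for i using h[rule_format, of "Suc i"] unfolding bk_hi_def by auto
  moreover have "l i \<le> m i \<and> c (Suc i) \<le> m i" for i using h[rule_format, of i] unfolding bk_lo_def by auto
  moreover have "m i \<le> c i" for i using h[rule_format, of i] unfolding bk_hi_def by (cases i) auto
  ultimately show "horiz_strip l m \<and> horiz_strip m c" unfolding horiz_strip_def by auto
qed

lemma bk_flip_bounds:
  assumes "\<forall>i. bk_lo l c i \<le> m i \<and> m i \<le> bk_hi l c i"
  shows "\<forall>i. bk_lo l c i \<le> bk_flip l c m i \<and> bk_flip l c m i \<le> bk_hi l c i"
proof
  fix i
  have "bk_lo l c i \<le> m i \<and> m i \<le> bk_hi l c i" using assms by blast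
  then show "bk_lo l c i \<le> bk_flip l c m i \<and> bk_flip l c m i \<le> bk_hi l c i"
    unfolding bk_flip_def by arith
qed

lemma bk_flip_bk_flip:
  assumes "\<forall>i. bk_lo l c i \<le> m i \<and> m i \<le> bk_hi l c i"
  shows "bk_flip l c (bk_flip l c m) = m"
  using assms unfolding bk_flip_def
  by (auto simp: fun_eq_iff) (meson add_diff_inverse_nat diff_diff_cancel le_add2 order_trans)

lemma sum_bk_bounds_aux:
  "(\<Sum>i<Suc M. bk_lo l c i + bk_hi l c i) + min (c (Suc M)) (l M)
     = (\<Sum>i<Suc M. l i) + (\<Sum>i<Suc (Suc M). c i)"
proof (induction M)
  case (Suc M)
  have "(\<Sum>i<Suc (Suc M). bk_lo l c i + bk_hi l c i) + min (c (Suc (Suc M))) (l (Suc M))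
     = ((\<Sum>i<Suc M. bk_lo l c i + bk_hi l c i) + min (c (Suc M)) (l M))
       + max (l (Suc M)) (c (Suc (Suc M))) + min (c (Suc (Suc M))) (l (Suc M))"
    unfolding bk_lo_def bk_hi_def by simp
  also have "\<dots> = (\<Sum>i<Suc M. l i) + (\<Sum>i<Suc (Suc M). c i) + l (Suc M) + c (Suc (Suc M))"
    unfolding Suc by simp
  finally show ?case by simp
qed (simp add: bk_lo_def bk_hi_def)

lemma psum_bk_flip:
  assumes "\<forall>i. bk_lo l c i \<le> m i \<and> m i \<le> bk_hi l c i" "c N = 0"
  shows "psum N (bk_flip l c m) = psum N l + psum N c - psum N m"
proof -
  have "(\<Sum>i<N. bk_lo l c i + bk_hi l c i) = psum N l + psum N c"
    using sum_bk_bounds_aux[where M = "N - 1" and l = l and c = c] assms(2) unfolding psum_def by (cases N) auto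
  moreover have "psum N (bk_flip l c m) = (\<Sum>i<N. bk_lo l c i + bk_hi l c i) - psum N m"
    unfolding bk_flip_def psum_def using assms(1)
    by (intro sum_subtractf_nat) (meson le_add2 order_trans)
  ultimately show ?thesis by simp
qed

lemma psum_mono: "(\<And>i. a i \<le> b i) \<Longrightarrow> psum N a \<le> psum N b"
  unfolding psum_def by (rule sum_mono) auto

lemma bender_knuth_in_strip_chains:
  assumes G: "G \<in> strip_chains N lam \<alpha>" and k: "Suc k < N" and sh: "is_shape N lam"
  shows "bender_knuth k G \<in> strip_chains N lam (adj_swap k \<alpha>)"
proof -
  let ?l = "G k" and ?m = "G (Suc k)" and ?c = "G (Suc (Suc k))"
  let ?m' = "bk_flip ?l ?c ?m"
  have strips: "horiz_strip ?l ?m \<and> horiz_strip ?m ?c"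
    using strip_chain_step[OF G, of k] strip_chain_step[OF G, of "Suc k"] k by simp
  then have box: "\<forall>i. bk_lo ?l ?c i \<le> ?m i \<and> ?m i \<le> bk_hi ?l ?c i"
    using horiz_strip_pair_iff_bk_bounds by blast
  have strips': "horiz_strip ?l ?m' \<and> horiz_strip ?m' ?c"
    using bk_flip_bounds[OF box] horiz_strip_pair_iff_bk_bounds by blast
  have "?c N = 0" using strip_chain_le[OF G, of "Suc (Suc k)" N] sh unfolding is_shape_def by auto
  then have psum_m': "psum N ?m' = psum N ?l + psum N ?c - psum N ?m"
    by (rule psum_bk_flip[OF box])
  have "psum N ?l \<le> psum N ?m" "psum N ?m \<le> psum N ?c"
    using strips unfolding horiz_strip_def by (auto intro: psum_mono)
  then have "adj_swap k \<alpha> k' = psum N (bender_knuth k G (Suc k')) - psum N (bender_knuth k G k')" for k'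
    using strip_chain_content[OF G, of k'] strip_chain_content[OF G, of k]
      strip_chain_content[OF G, of "Suc k"] psum_m'
    unfolding bender_knuth_def adj_swap_def by auto
  moreover have "horiz_strip (bender_knuth k G k') (bender_knuth k G (Suc k'))" if "k' < N" for k'
    using strips' strip_chain_step[OF G that] unfolding bender_knuth_def
    by (cases "k' = k"; cases "k' = Suc k") auto
  ultimately show ?thesis
    using strip_chain_0[OF G] strip_chain_final[OF G] k
    unfolding strip_chains_def bender_knuth_def by auto
qed

lemma bender_knuth_involution:
  assumes G: "G \<in> strip_chains N lam \<alpha>" and k: "Suc k < N"
  shows "bender_knuth k (bender_knuth k G) = G"
proof -
  let ?l = "G k" and ?m = "G (Suc k)" and ?c = "G (Suc (Suc k))"
  have "horiz_strip ?l ?m \<and> horiz_strip ?m ?c"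
    using strip_chain_step[OF G, of k] strip_chain_step[OF G, of "Suc k"] k by simp
  then have "bk_flip ?l ?c (bk_flip ?l ?c ?m) = ?m"
    using bk_flip_bk_flip horiz_strip_pair_iff_bk_bounds by blast
  then show ?thesis unfolding bender_knuth_def by (auto simp: fun_eq_iff)
qed

lemma kostka_adj_swap:
  assumes k: "Suc k < N" and sh: "is_shape N lam"
  shows "kostka N lam (adj_swap k \<alpha>) = kostka N lam \<alpha>"
proof -
  have "bij_betw (bender_knuth k) (strip_chains N lam \<alpha>) (strip_chains N lam (adj_swap k \<alpha>))"
  proof (rule bij_betw_byWitness[where f' = "bender_knuth k"])
    show "bender_knuth k ` strip_chains N lam (adj_swap k \<alpha>) \<subseteq> strip_chains N lam \<alpha>"
      using bender_knuth_in_strip_chains[of _ N lam "adj_swap k \<alpha>" k] k sh by auto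
  qed (use bender_knuth_involution bender_knuth_in_strip_chains k sh in blast)+
  then show ?thesis using kostka_eq_card_strip_chains[OF sh] bij_betw_same_card by metis
qed

section \<open>Unitriangularity of the Kostka matrix\<close>

definition superstandard_chain :: "(nat \<Rightarrow> nat) \<Rightarrow> nat \<Rightarrow> nat \<Rightarrow> nat" where
  "superstandard_chain lam k i = (if i < k then lam i else 0)"

lemma strip_chain_eq_0:
  assumes G: "G \<in> strip_chains N lam \<alpha>" and sh: "is_shape N lam"
  shows "k \<le> i \<Longrightarrow> G k i = 0"
proof (induction k arbitrary: i)
  case 0 then show ?case using strip_chain_0[OF G] by simp
next
  case (Suc k)
  then obtain i' where i': "i = Suc i'" "k \<le> i'" by (cases i) auto
  show ?case
  proof (cases "k < N")
    case True
    then have "G (Suc k) (Suc i') \<le> G k i'"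
      using strip_chain_step[OF G True] unfolding horiz_strip_def by auto
    then show ?thesis using Suc.IH[OF i'(2)] i' by simp
  next
    case False
    then show ?thesis
      using strip_chain_final[OF G, of "Suc k"] sh Suc.prems unfolding is_shape_def by auto
  qed
qed

lemma strip_chain_le_superstandard:
  assumes G: "G \<in> strip_chains N lam \<alpha>" and sh: "is_shape N lam"
  shows "G k i \<le> superstandard_chain lam k i"
  using strip_chain_le[OF G, of k i] strip_chain_eq_0[OF G sh, of k i]
  unfolding superstandard_chain_def by auto

lemma psum_superstandard_chain:
  assumes sh: "is_shape N lam"
  shows "psum N (superstandard_chain lam k) = psum k lam"
proof -
  have "psum N (superstandard_chain lam k) = (\<Sum>i\<in>{..<N} \<inter> {..<k}. lam i)"
    unfolding psum_def superstandard_chain_def by (simp add: sum.If_cases Int_def)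
  also have "\<dots> = (\<Sum>i<k. lam i)"
  proof (rule sum.mono_neutral_left)
    show "\<forall>i\<in>{..<k} - {..<N} \<inter> {..<k}. lam i = 0"
      using sh unfolding is_shape_def by (metis DiffD1 DiffD2 IntI lessThan_iff not_le)
  qed auto
  finally show ?thesis unfolding psum_def .
qed

lemma strip_chain_psum_Suc:
  assumes G: "G \<in> strip_chains N lam \<alpha>"
  shows "psum N (G (Suc k)) = psum N (G k) + \<alpha> k"
proof -
  have "psum N (G k) \<le> psum N (G (Suc k))" by (rule psum_mono) (rule strip_chain_mono_Suc[OF G])
  then show ?thesis using strip_chain_content[OF G, of k] by simp
qed

lemma strip_chain_psum:
  assumes G: "G \<in> strip_chains N lam \<alpha>"
  shows "psum N (G k) = psum k \<alpha>"
proof (induction k)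
  case 0 then show ?case using strip_chain_0[OF G] unfolding psum_def by simp
next
  case (Suc k) then show ?case using strip_chain_psum_Suc[OF G, of k] unfolding psum_def by simp
qed

lemma kostka_dominance:
  assumes "kostka N lam \<alpha> \<noteq> 0" "is_shape N lam"
  shows "psum k \<alpha> \<le> psum k lam"
proof -
  obtain G where G: "G \<in> strip_chains N lam \<alpha>"
    using assms kostka_eq_card_strip_chains by fastforce
  have "psum N (G k) \<le> psum N (superstandard_chain lam k)"
    using strip_chain_le_superstandard[OF G assms(2)] by (rule psum_mono)
  then show ?thesis using strip_chain_psum[OF G] psum_superstandard_chain[OF assms(2)] by simp
qed

lemma kostka_content_outside:
  assumes "kostka N lam \<alpha> \<noteq> 0" "is_shape N lam" "N \<le> k"
  shows "\<alpha> k = 0"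
proof -
  obtain G where G: "G \<in> strip_chains N lam \<alpha>"
    using assms kostka_eq_card_strip_chains by fastforce
  show ?thesis
    using strip_chain_content[OF G, of k] strip_chain_final[OF G, of k]
      strip_chain_final[OF G, of "Suc k"] assms(3) by simp
qed

lemma kostka_content_total:
  assumes "kostka N lam \<alpha> \<noteq> 0" "is_shape N lam"
  shows "psum N \<alpha> = psum N lam"
proof -
  obtain G where G: "G \<in> strip_chains N lam \<alpha>"
    using assms kostka_eq_card_strip_chains by fastforce
  show ?thesis using strip_chain_psum[OF G, of N] strip_chain_final[OF G, of N] by simp
qed

lemma superstandard_chain_in_strip_chains:
  assumes sh: "is_shape N lam"
  shows "superstandard_chain lam \<in> strip_chains N lam lam"
  unfolding strip_chains_def
proof (intro CollectI conjI allI impI)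
  fix k assume "N \<le> k"
  then show "superstandard_chain lam k = lam"
    using sh unfolding superstandard_chain_def is_shape_def by (auto simp: fun_eq_iff)
next
  fix k assume "k < N"
  show "horiz_strip (superstandard_chain lam k) (superstandard_chain lam (Suc k))"
    using sh unfolding horiz_strip_def superstandard_chain_def is_shape_def by auto
next
  fix k
  show "lam k = psum N (superstandard_chain lam (Suc k)) - psum N (superstandard_chain lam k)"
    unfolding psum_superstandard_chain[OF sh] by (simp add: psum_def)
qed (simp add: superstandard_chain_def fun_eq_iff)

lemma kostka_diag:
  assumes sh: "is_shape N lam"
  shows "kostka N lam lam = 1"
proof -
  have "G = superstandard_chain lam" if G: "G \<in> strip_chains N lam lam" for G
  proof (intro ext)
    fix k i
    show "G k i = superstandard_chain lam k i"
    proof (cases "i < N")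
      case True
      have "psum N (G k) = psum N (superstandard_chain lam k)"
        using strip_chain_psum[OF G] psum_superstandard_chain[OF sh] by simp
      then show ?thesis
        using sum_mono_inv[of "G k" "{..<N}" "superstandard_chain lam k" i] True
          strip_chain_le_superstandard[OF G sh] unfolding psum_def by auto
    next
      case False
      then show ?thesis
        using strip_chain_le_superstandard[OF G sh, of k i] sh
        unfolding is_shape_def superstandard_chain_def by (auto simp: not_less)
    qed
  qed
  then have "strip_chains N lam lam = {superstandard_chain lam}"
    using superstandard_chain_in_strip_chains[OF sh] by blast
  then show ?thesis using kostka_eq_card_strip_chains[OF sh] by simp
qed

section \<open>Partitions as vectors\<close>

lemma length_le_sum_list_pos: "(\<forall>x\<in>set xs. 0 < (x::nat)) \<Longrightarrow> length xs \<le> sum_list xs"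
  by (induction xs) auto

lemma is_partition_length_le: "is_partition n \<mu> \<Longrightarrow> length \<mu> \<le> n"
  unfolding is_partition_def using length_le_sum_list_pos by blast

lemma is_partition_part_le: "is_partition n \<mu> \<Longrightarrow> x \<in> set \<mu> \<Longrightarrow> x \<le> n"
  unfolding is_partition_def using member_le_sum_list by blast

lemma finite_partitions: "finite (partitions n)"
proof (rule finite_subset)
  show "partitions n \<subseteq> {xs. set xs \<subseteq> {..n} \<and> length xs \<le> n}"
    using is_partition_length_le is_partition_part_le unfolding partitions_def by fastforce
  show "finite {xs. set xs \<subseteq> {..n} \<and> length xs \<le> n}"
    using finite_lists_length_le[of "{..n}" n] by simp
qed

lemma vec_of_list_beyond: "length \<mu> \<le> i \<Longrightarrow> vec_of_list \<mu> i = 0"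
  unfolding vec_of_list_def by simp

lemma antimono_vec_of_partition: "is_partition n \<mu> \<Longrightarrow> antimono (vec_of_list \<mu>)"
  unfolding antimono_iff_le_Suc vec_of_list_def is_partition_def sorted_rev_iff_nth_Suc by auto

lemma is_shape_vec_of_partition: "is_partition n \<mu> \<Longrightarrow> is_shape n (vec_of_list \<mu>)"
  using antimono_vec_of_partition[of n \<mu>] is_partition_length_le[of n \<mu>] vec_of_list_beyond[of \<mu>]
  unfolding is_shape_def antimono_iff_le_Suc by auto

lemma psum_vec_of_list: "length \<mu> \<le> k \<Longrightarrow> psum k (vec_of_list \<mu>) = sum_list \<mu>"
proof -
  assume k: "length \<mu> \<le> k"
  have "psum k (vec_of_list \<mu>) = (\<Sum>i<length \<mu>. vec_of_list \<mu> i)"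
    unfolding psum_def by (rule sum.mono_neutral_right) (use k vec_of_list_beyond in auto)
  also have "\<dots> = sum_list \<mu>" by (simp add: vec_of_list_def sum_list_sum_nth atLeast0LessThan)
  finally show ?thesis .
qed

lemma vec_of_list_inj:
  assumes pos: "\<forall>x\<in>set \<mu>. 0 < x" "\<forall>x\<in>set \<nu>. 0 < x"
    and eq: "vec_of_list \<mu> = vec_of_list \<nu>"
  shows "\<mu> = \<nu>"
proof -
  have support: "{i. 0 < vec_of_list xs i} = {..<length xs}" if "\<forall>x\<in>set xs. 0 < x" for xs
    using that by (auto simp: vec_of_list_def split: if_splits)
  have "length \<mu> = length \<nu>" using support[OF pos(1)] support[OF pos(2)] eq by (metis card_lessThan)
  then show ?thesis using eq by (metis nth_equalityI vec_of_list_def)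
qed

lemma partitions_vec_of_list_inj:
  "\<mu> \<in> partitions n \<Longrightarrow> \<nu> \<in> partitions n \<Longrightarrow> vec_of_list \<mu> = vec_of_list \<nu> \<Longrightarrow> \<mu> = \<nu>"
  unfolding partitions_def is_partition_def using vec_of_list_inj by blast

text \<open>Exponent vectors of monomials of degree \<open>n\<close> in the variables \<open>x\<^sub>0, \<dots>, x\<^sub>n\<^sub>-\<^sub>1\<close>.\<close>

definition weak_comp :: "nat \<Rightarrow> (nat \<Rightarrow> nat) \<Rightarrow> bool" where
  "weak_comp n \<alpha> \<longleftrightarrow> (\<forall>i. n \<le> i \<longrightarrow> \<alpha> i = 0) \<and> psum n \<alpha> = n"

lemma weak_comp_vec_of_partition:
  assumes "\<mu> \<in> partitions n" shows "weak_comp n (vec_of_list \<mu>)"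
proof -
  have ip: "is_partition n \<mu>" using assms unfolding partitions_def by simp
  have l: "length \<mu> \<le> n" using is_partition_length_le[OF ip] .
  show ?thesis
    using psum_vec_of_list[OF l] ip vec_of_list_beyond[of \<mu>] l
    unfolding is_partition_def weak_comp_def by auto
qed

lemma antimono_weak_comp_imp_partition:
  assumes "antimono \<alpha>" "weak_comp n \<alpha>"
  shows "\<exists>\<mu>\<in>partitions n. vec_of_list \<mu> = \<alpha>"
proof -
  have ex: "\<exists>i. \<alpha> i = 0" using assms(2) unfolding weak_comp_def by auto
  define m where "m = (LEAST i. \<alpha> i = 0)"
  have mn: "m \<le> n" unfolding m_def using assms(2) unfolding weak_comp_def by (auto intro: Least_le)
  have pos: "i < m \<Longrightarrow> 0 < \<alpha> i" for i unfolding m_def using not_less_Least by blast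
  have zero: "m \<le> i \<Longrightarrow> \<alpha> i = 0" for i
    using antimonoD[OF assms(1), of m i] LeastI_ex[OF ex] unfolding m_def by simp
  define \<mu> where "\<mu> = map \<alpha> [0..<m]"
  have vec: "vec_of_list \<mu> = \<alpha>" unfolding \<mu>_def vec_of_list_def by (auto simp: fun_eq_iff zero)
  have "psum m \<alpha> = psum n \<alpha>"
    unfolding psum_def by (rule sum.mono_neutral_left) (use mn zero in auto)
  then have "sum_list \<mu> = n"
    using psum_vec_of_list[of \<mu> m] vec assms(2) unfolding \<mu>_def weak_comp_def by simp
  moreover have "sorted (rev \<mu>)"
    unfolding \<mu>_def sorted_rev_iff_nth_Suc using assms(1) unfolding antimono_iff_le_Suc by simp
  moreover have "\<forall>x\<in>set \<mu>. 0 < x" unfolding \<mu>_def using pos by auto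
  ultimately have "\<mu> \<in> partitions n" unfolding partitions_def is_partition_def by simp
  with vec show ?thesis by blast
qed

section \<open>Existence and uniqueness of Schur expansions\<close>

definition sym_hom :: "nat \<Rightarrow> ((nat \<Rightarrow> nat) \<Rightarrow> int) \<Rightarrow> bool" where
  "sym_hom n f \<longleftrightarrow> (\<forall>\<alpha>. f \<alpha> \<noteq> 0 \<longrightarrow> weak_comp n \<alpha>) \<and> (\<forall>k \<alpha>. Suc k < n \<longrightarrow> f (adj_swap k \<alpha>) = f \<alpha>)"

definition is_schur_expansion :: "nat \<Rightarrow> ((nat \<Rightarrow> nat) \<Rightarrow> int) \<Rightarrow> (nat list \<Rightarrow> int) \<Rightarrow> bool" where
  "is_schur_expansion n f c \<longleftrightarrow> (\<forall>\<mu>. \<mu> \<notin> partitions n \<longrightarrow> c \<mu> = 0) \<and>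
      (\<forall>\<alpha>. f \<alpha> = (\<Sum>\<mu>\<in>partitions n. c \<mu> * scoeff n \<mu> \<alpha>))"

lemma sym_hom_scoeff:
  assumes "\<mu> \<in> partitions n"
  shows "sym_hom n (scoeff n \<mu>)"
proof -
  have sh: "is_shape n (vec_of_list \<mu>)" using assms is_shape_vec_of_partition unfolding partitions_def by simp
  have "psum n (vec_of_list \<mu>) = n" using weak_comp_vec_of_partition[OF assms] unfolding weak_comp_def by simp
  then show ?thesis
    unfolding sym_hom_def scoeff_eq_kostka weak_comp_def
    using kostka_content_outside[OF _ sh] kostka_content_total[OF _ sh] kostka_adj_swap[OF _ sh] by auto
qed

lemma sym_hom_diff_lincomb:
  assumes f: "sym_hom n f" and g: "\<And>\<mu>. \<mu> \<in> A \<Longrightarrow> sym_hom n (g \<mu>)"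
  shows "sym_hom n (\<lambda>\<alpha>. f \<alpha> - (\<Sum>\<mu>\<in>A. c \<mu> * g \<mu> \<alpha>))"
  unfolding sym_hom_def
proof (intro conjI allI impI)
  fix \<alpha> assume h: "f \<alpha> - (\<Sum>\<mu>\<in>A. c \<mu> * g \<mu> \<alpha>) \<noteq> 0"
  show "weak_comp n \<alpha>"
  proof (cases "f \<alpha> = 0")
    case True
    have "\<exists>\<mu>\<in>A. g \<mu> \<alpha> \<noteq> 0"
    proof (rule ccontr)
      assume "\<not> (\<exists>\<mu>\<in>A. g \<mu> \<alpha> \<noteq> 0)"
      then have "(\<Sum>\<mu>\<in>A. c \<mu> * g \<mu> \<alpha>) = 0" by simp
      with h True show False by simp
    qed
    then show ?thesis using g unfolding sym_hom_def by blast
  qed (use f in \<open>unfold sym_hom_def, blast\<close>)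
next
  fix k \<alpha> assume k: "Suc k < n"
  have "g \<mu> (adj_swap k \<alpha>) = g \<mu> \<alpha>" if "\<mu> \<in> A" for \<mu>
    using g[OF that] k unfolding sym_hom_def by blast
  moreover have "f (adj_swap k \<alpha>) = f \<alpha>" using f k unfolding sym_hom_def by blast
  ultimately show "f (adj_swap k \<alpha>) - (\<Sum>\<mu>\<in>A. c \<mu> * g \<mu> (adj_swap k \<alpha>)) = f \<alpha> - (\<Sum>\<mu>\<in>A. c \<mu> * g \<mu> \<alpha>)"
    by simp
qed

text \<open>
  A linear extension of dominance order: \<open>\<alpha> \<unlhd> \<beta>\<close> implies
  \<open>dom_potential n \<alpha> \<le> dom_potential n \<beta>\<close>, with equality only for \<open>\<alpha> = \<beta>\<close>, and sorting an exponent
  vector by adjacent swaps strictly increases it.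
\<close>

definition dom_potential :: "nat \<Rightarrow> (nat \<Rightarrow> nat) \<Rightarrow> nat" where
  "dom_potential n \<alpha> = (\<Sum>k<n. psum (Suc k) \<alpha>)"

lemma psum_Suc: "psum (Suc k) a = psum k a + a k"
  unfolding psum_def by simp

lemma psum_adj_swap_le: "k \<le> i \<Longrightarrow> psum k (adj_swap i \<alpha>) = psum k \<alpha>"
  unfolding psum_def adj_swap_def by (intro sum.cong) auto

lemma psum_adj_swap:
  "psum k (adj_swap i \<alpha>) = (if k = Suc i then psum k \<alpha> + \<alpha> (Suc i) - \<alpha> i else psum k \<alpha>)"
proof (induction k)
  case (Suc k)
  consider "k = Suc i" | "k = i" | "k \<noteq> i" "k \<noteq> Suc i" by blast
  then show ?case
  proof cases
    case 1
    have "psum (Suc k) (adj_swap i \<alpha>) = psum k (adj_swap i \<alpha>) + adj_swap i \<alpha> k" by (rule psum_Suc)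
    also have "psum k (adj_swap i \<alpha>) = psum i \<alpha> + \<alpha> (Suc i)"
      using 1 psum_adj_swap_le[of i i \<alpha>] psum_Suc[of i "adj_swap i \<alpha>"] by (simp add: adj_swap_def)
    finally show ?thesis using 1 psum_Suc[of k \<alpha>] psum_Suc[of i \<alpha>] by (simp add: adj_swap_def)
  next
    case 2
    then show ?thesis using Suc unfolding psum_Suc adj_swap_def by (simp add: psum_def)
  next
    case 3
    then have "adj_swap i \<alpha> k = \<alpha> k" by (simp add: adj_swap_def)
    then show ?thesis using Suc 3 psum_Suc[of k \<alpha>] psum_Suc[of k "adj_swap i \<alpha>"] by simp
  qed
qed (simp add: psum_def)

lemma dom_potential_adj_swap:
  assumes "Suc i < n"
  shows "dom_potential n (adj_swap i \<alpha>) + \<alpha> i = dom_potential n \<alpha> + \<alpha> (Suc i)"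
proof -
  have iA: "i \<in> {..<n}" using assms by simp
  have "dom_potential n (adj_swap i \<alpha>) = psum (Suc i) (adj_swap i \<alpha>) + (\<Sum>k\<in>{..<n} - {i}. psum (Suc k) \<alpha>)"
    unfolding dom_potential_def by (simp add: sum.remove[OF _ iA] psum_adj_swap)
  moreover have "dom_potential n \<alpha> = psum (Suc i) \<alpha> + (\<Sum>k\<in>{..<n} - {i}. psum (Suc k) \<alpha>)"
    unfolding dom_potential_def by (rule sum.remove[OF _ iA]) simp
  moreover have "\<alpha> i \<le> psum (Suc i) \<alpha>" unfolding psum_Suc by simp
  ultimately show ?thesis using psum_adj_swap[of "Suc i" i \<alpha>] by simp
qed

lemma weak_comp_adj_swap: "weak_comp n \<alpha> \<Longrightarrow> Suc i < n \<Longrightarrow> weak_comp n (adj_swap i \<alpha>)"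
  unfolding weak_comp_def using psum_adj_swap[of n i \<alpha>] by (auto simp: adj_swap_def)

lemma weak_comp_psum_le: "weak_comp n \<alpha> \<Longrightarrow> psum k \<alpha> \<le> n"
proof -
  assume D: "weak_comp n \<alpha>"
  have "psum k \<alpha> \<le> psum (max k n) \<alpha>" unfolding psum_def by (rule sum_mono2) auto
  also have "psum (max k n) \<alpha> = psum n \<alpha>"
    unfolding psum_def by (rule sum.mono_neutral_right) (use D in \<open>auto simp: weak_comp_def\<close>)
  finally show ?thesis using D unfolding weak_comp_def by simp
qed

lemma dom_potential_bound: "weak_comp n \<alpha> \<Longrightarrow> dom_potential n \<alpha> \<le> n * n"
proof -
  assume "weak_comp n \<alpha>"
  then have "dom_potential n \<alpha> \<le> (\<Sum>k<n. n)"
    unfolding dom_potential_def by (intro sum_mono weak_comp_psum_le)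
  then show ?thesis by simp
qed

lemma sym_hom_sort:
  assumes "sym_hom n f" "weak_comp n \<alpha>" "\<not> antimono \<alpha>"
  shows "\<exists>\<beta>. weak_comp n \<beta> \<and> antimono \<beta> \<and> f \<beta> = f \<alpha> \<and> dom_potential n \<alpha> < dom_potential n \<beta>"
  using assms(2,3)
proof (induction "n * n - dom_potential n \<alpha>" arbitrary: \<alpha> rule: less_induct)
  case less
  then obtain i where i: "\<alpha> i < \<alpha> (Suc i)" unfolding antimono_iff_le_Suc by (auto simp: not_le)
  have si: "Suc i < n"
    using less.prems(1) i unfolding weak_comp_def by (metis not_less0 not_le)
  let ?a = "adj_swap i \<alpha>"
  have D': "weak_comp n ?a" using weak_comp_adj_swap[OF less.prems(1) si] .
  have lt: "dom_potential n \<alpha> < dom_potential n ?a" using dom_potential_adj_swap[OF si, of \<alpha>] i by simp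
  have f: "f ?a = f \<alpha>" using assms(1) si unfolding sym_hom_def by blast
  show ?case
  proof (cases "antimono ?a")
    case True
    then show ?thesis using D' lt f by blast
  next
    case False
    have "n * n - dom_potential n ?a < n * n - dom_potential n \<alpha>"
      using lt dom_potential_bound[OF D'] by simp
    then show ?thesis using less.hyps[OF _ D' False] lt f by fastforce
  qed
qed

lemma dom_potential_mono:
  assumes "\<And>k. psum k \<alpha> \<le> psum k lam"
  shows "dom_potential n \<alpha> \<le> dom_potential n lam"
  unfolding dom_potential_def by (rule sum_mono) (rule assms)

lemma dom_potential_eq_imp_eq:
  assumes "\<And>k. psum k \<alpha> \<le> psum k lam" "dom_potential n \<alpha> = dom_potential n lam" "i < n"
  shows "\<alpha> i = lam i"
proof -
  have e: "psum (Suc k) \<alpha> = psum (Suc k) lam" if "k < n" for k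
    using sum_mono_inv[of "\<lambda>k. psum (Suc k) \<alpha>" "{..<n}" "\<lambda>k. psum (Suc k) lam" k] assms(1,2) that
    unfolding dom_potential_def by simp
  show ?thesis
  proof (cases i)
    case 0 then show ?thesis using e[of 0] assms(3) unfolding psum_def by simp
  next
    case (Suc j)
    have "psum (Suc i) \<alpha> = psum (Suc i) lam" "psum i \<alpha> = psum i lam"
      using e[of i] e[of j] assms(3) Suc by auto
    then show ?thesis using psum_Suc[of i \<alpha>] psum_Suc[of i lam] by simp
  qed
qed

lemma scoeff_dom_potential:
  assumes "\<mu> \<in> partitions n" "scoeff n \<mu> \<alpha> \<noteq> 0"
  shows "dom_potential n \<alpha> \<le> dom_potential n (vec_of_list \<mu>)"
    and "dom_potential n \<alpha> = dom_potential n (vec_of_list \<mu>) \<Longrightarrow> \<alpha> = vec_of_list \<mu>"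
proof -
  have sh: "is_shape n (vec_of_list \<mu>)" using assms is_shape_vec_of_partition unfolding partitions_def by simp
  have K: "kostka n (vec_of_list \<mu>) \<alpha> \<noteq> 0" using assms(2) unfolding scoeff_eq_kostka by simp
  show "dom_potential n \<alpha> \<le> dom_potential n (vec_of_list \<mu>)"
    using kostka_dominance[OF K sh] by (intro dom_potential_mono)
  assume "dom_potential n \<alpha> = dom_potential n (vec_of_list \<mu>)"
  then have "\<alpha> i = vec_of_list \<mu> i" if "i < n" for i
    using dom_potential_eq_imp_eq[OF kostka_dominance[OF K sh]] that by blast
  moreover have "\<alpha> i = vec_of_list \<mu> i" if "n \<le> i" for i
    using kostka_content_outside[OF K sh that] sh that unfolding is_shape_def by simp
  ultimately show "\<alpha> = vec_of_list \<mu>" by (meson ext not_le)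
qed

lemma scoeff_diag: "\<mu> \<in> partitions n \<Longrightarrow> scoeff n \<mu> (vec_of_list \<mu>) = 1"
  unfolding scoeff_eq_kostka using kostka_diag is_shape_vec_of_partition unfolding partitions_def by simp

lemma sum_eq_single:
  assumes "finite A" "a \<in> A" "\<forall>x\<in>A - {a}. g x = (0::'b::comm_monoid_add)"
  shows "sum g A = g a"
  using sum.remove[OF assms(1,2), of g] sum.neutral[OF assms(3)] by simp

text \<open>
  The coefficients of \<open>f\<close> at exponent vectors of maximal potential \<open>m\<close> that are partitions are the
  Schur coefficients of those partitions: subtracting the corresponding Schur polynomials leaves
  a symmetric polynomial supported below potential \<open>m\<close>.
\<close>

lemma sym_hom_strip_top_potential:
  assumes f: "sym_hom n f" and top: "\<forall>\<alpha>. f \<alpha> \<noteq> 0 \<longrightarrow> dom_potential n \<alpha> \<le> m"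
    and c: "c = (\<lambda>\<mu>. if \<mu> \<in> partitions n \<and> dom_potential n (vec_of_list \<mu>) = m then f (vec_of_list \<mu>) else 0)"
  shows "\<forall>\<alpha>. f \<alpha> - (\<Sum>\<mu>\<in>partitions n. c \<mu> * scoeff n \<mu> \<alpha>) \<noteq> 0 \<longrightarrow> dom_potential n \<alpha> < m"
proof -
  define g where "g \<alpha> = f \<alpha> - (\<Sum>\<mu>\<in>partitions n. c \<mu> * scoeff n \<mu> \<alpha>)" for \<alpha>
  have gs: "sym_hom n g" unfolding g_def by (rule sym_hom_diff_lincomb[OF f sym_hom_scoeff])
  have c_nz: "dom_potential n (vec_of_list \<mu>) = m" if "c \<mu> \<noteq> 0" for \<mu>
    using that unfolding c by (auto split: if_splits)
  have above: "g \<alpha> = 0" if "m < dom_potential n \<alpha>" for \<alpha>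
  proof -
    have "c \<mu> * scoeff n \<mu> \<alpha> = 0" if "\<mu> \<in> partitions n" for \<mu>
    proof (cases "c \<mu> = 0")
      case False
      then have "\<not> dom_potential n \<alpha> \<le> dom_potential n (vec_of_list \<mu>)"
        using c_nz \<open>m < dom_potential n \<alpha>\<close> by simp
      then show ?thesis using scoeff_dom_potential(1)[OF that] by auto
    qed simp
    then have "(\<Sum>\<mu>\<in>partitions n. c \<mu> * scoeff n \<mu> \<alpha>) = 0" by (rule sum.neutral[OF ballI])
    moreover have "f \<alpha> = 0" using top that by (meson leD)
    ultimately show ?thesis unfolding g_def by simp
  qed
  have at_partition: "g \<alpha> = 0"
    if pot: "dom_potential n \<alpha> = m" and sorted: "antimono \<alpha>" "weak_comp n \<alpha>" for \<alpha>
  proof -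
    obtain \<nu> where \<nu>: "\<nu> \<in> partitions n" "vec_of_list \<nu> = \<alpha>"
      using antimono_weak_comp_imp_partition[OF sorted] by blast
    have "c \<mu> * scoeff n \<mu> \<alpha> = 0" if "\<mu> \<in> partitions n - {\<nu>}" for \<mu>
    proof (rule ccontr)
      assume "c \<mu> * scoeff n \<mu> \<alpha> \<noteq> 0"
      then have "\<alpha> = vec_of_list \<mu>"
        using scoeff_dom_potential(2)[of \<mu> n \<alpha>] c_nz pot that by auto
      then show False using partitions_vec_of_list_inj[of \<mu> n \<nu>] \<nu> that by auto
    qed
    then have "(\<Sum>\<mu>\<in>partitions n. c \<mu> * scoeff n \<mu> \<alpha>) = c \<nu> * scoeff n \<nu> \<alpha>"
      by (intro sum_eq_single[OF finite_partitions \<nu>(1)]) blast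
    also have "\<dots> = f \<alpha>" using scoeff_diag[OF \<nu>(1)] \<nu> pot unfolding c by simp
    finally show ?thesis unfolding g_def by simp
  qed
  have "dom_potential n \<alpha> < m" if "g \<alpha> \<noteq> 0" for \<alpha>
  proof (rule ccontr)
    assume "\<not> dom_potential n \<alpha> < m"
    moreover have D: "weak_comp n \<alpha>" using gs that unfolding sym_hom_def by blast
    ultimately consider "m < dom_potential n \<alpha>" | "dom_potential n \<alpha> = m" "antimono \<alpha>"
      | "dom_potential n \<alpha> = m" "\<not> antimono \<alpha>" by linarith
    then show False
    proof cases
      case 3
      then obtain \<beta> where "g \<beta> = g \<alpha>" "m < dom_potential n \<beta>"
        using sym_hom_sort[OF gs D] by auto
      then show False using above that by simp
    qed (use above at_partition that D in auto)
  qed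
  then show ?thesis unfolding g_def by blast
qed

lemma schur_expansion_exists:
  assumes "sym_hom n f"
  shows "\<exists>c. is_schur_expansion n f c"
proof -
  have "\<exists>c. is_schur_expansion n f c"
    if "sym_hom n f" "\<forall>\<alpha>. f \<alpha> \<noteq> 0 \<longrightarrow> dom_potential n \<alpha> < m" for f m
    using that
  proof (induction m arbitrary: f)
    case 0
    then have "f = (\<lambda>\<alpha>. 0)" by auto
    then show ?case unfolding is_schur_expansion_def by (intro exI[of _ "\<lambda>\<mu>. 0"]) simp
  next
    case (Suc m)
    define c1 where "c1 \<mu> = (if \<mu> \<in> partitions n \<and> dom_potential n (vec_of_list \<mu>) = m
      then f (vec_of_list \<mu>) else 0)" for \<mu>
    define g where "g \<alpha> = f \<alpha> - (\<Sum>\<mu>\<in>partitions n. c1 \<mu> * scoeff n \<mu> \<alpha>)" for \<alpha>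
    have "sym_hom n g" unfolding g_def by (rule sym_hom_diff_lincomb[OF Suc.prems(1) sym_hom_scoeff])
    moreover have "\<forall>\<alpha>. g \<alpha> \<noteq> 0 \<longrightarrow> dom_potential n \<alpha> < m"
      unfolding g_def using Suc.prems by (intro sym_hom_strip_top_potential) (auto simp: c1_def)
    ultimately obtain c2 where c2: "is_schur_expansion n g c2" using Suc.IH by blast
    have "f \<alpha> = (\<Sum>\<mu>\<in>partitions n. (c1 \<mu> + c2 \<mu>) * scoeff n \<mu> \<alpha>)" for \<alpha>
    proof -
      have "f \<alpha> = g \<alpha> + (\<Sum>\<mu>\<in>partitions n. c1 \<mu> * scoeff n \<mu> \<alpha>)" unfolding g_def by simp
      also have "g \<alpha> = (\<Sum>\<mu>\<in>partitions n. c2 \<mu> * scoeff n \<mu> \<alpha>)"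
        using c2 unfolding is_schur_expansion_def by blast
      finally show ?thesis by (simp add: sum.distrib distrib_right)
    qed
    then have "is_schur_expansion n f (\<lambda>\<mu>. c1 \<mu> + c2 \<mu>)"
      using c2 unfolding is_schur_expansion_def c1_def by simp
    then show ?case by blast
  qed
  moreover have "\<forall>\<alpha>. f \<alpha> \<noteq> 0 \<longrightarrow> dom_potential n \<alpha> < Suc (n * n)"
    using assms dom_potential_bound unfolding sym_hom_def by (meson le_imp_less_Suc)
  ultimately show ?thesis using assms by blast
qed

lemma schur_linear_independent:
  assumes "\<forall>\<mu>. \<mu> \<notin> partitions n \<longrightarrow> c \<mu> = 0" "\<forall>\<alpha>. (\<Sum>\<mu>\<in>partitions n. c \<mu> * scoeff n \<mu> \<alpha>) = 0"
  shows "c = (\<lambda>\<mu>. 0)"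
proof (rule ccontr)
  define A where "A = {\<mu> \<in> partitions n. c \<mu> \<noteq> 0}"
  assume "c \<noteq> (\<lambda>\<mu>. 0)"
  then have "A \<noteq> {}" using assms(1) unfolding A_def by auto
  moreover have fA: "finite A" unfolding A_def using finite_partitions by simp
  ultimately have "Max ((\<lambda>\<mu>. dom_potential n (vec_of_list \<mu>)) ` A) \<in> (\<lambda>\<mu>. dom_potential n (vec_of_list \<mu>)) ` A"
    by (intro Max_in) auto
  then obtain \<mu>0 where \<mu>0: "\<mu>0 \<in> A"
    and M: "dom_potential n (vec_of_list \<mu>0) = Max ((\<lambda>\<mu>. dom_potential n (vec_of_list \<mu>)) ` A)"
    by auto
  have top: "dom_potential n (vec_of_list \<nu>) \<le> dom_potential n (vec_of_list \<mu>0)" if "\<nu> \<in> A" for \<nu>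
    unfolding M using fA that by (intro Max_ge) auto
  have p0: "\<mu>0 \<in> partitions n" using \<mu>0 unfolding A_def by simp
  have "c \<nu> * scoeff n \<nu> (vec_of_list \<mu>0) = 0" if \<nu>: "\<nu> \<in> partitions n - {\<mu>0}" for \<nu>
  proof (rule ccontr)
    assume "c \<nu> * scoeff n \<nu> (vec_of_list \<mu>0) \<noteq> 0"
    then have c: "\<nu> \<in> A" "scoeff n \<nu> (vec_of_list \<mu>0) \<noteq> 0" using \<nu> unfolding A_def by auto
    have \<nu>P: "\<nu> \<in> partitions n" using \<nu> by blast
    have "dom_potential n (vec_of_list \<mu>0) = dom_potential n (vec_of_list \<nu>)"
      using top[OF c(1)] scoeff_dom_potential(1)[OF \<nu>P c(2)] by linarith
    then have "vec_of_list \<mu>0 = vec_of_list \<nu>" by (rule scoeff_dom_potential(2)[OF \<nu>P c(2)])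
    then show False using partitions_vec_of_list_inj[of \<nu> n \<mu>0] \<nu> p0 by auto
  qed
  then have "(\<Sum>\<nu>\<in>partitions n. c \<nu> * scoeff n \<nu> (vec_of_list \<mu>0)) = c \<mu>0 * scoeff n \<mu>0 (vec_of_list \<mu>0)"
    by (intro sum_eq_single[OF finite_partitions p0]) blast
  then have "(\<Sum>\<nu>\<in>partitions n. c \<nu> * scoeff n \<nu> (vec_of_list \<mu>0)) = c \<mu>0"
    using scoeff_diag[OF p0] by simp
  then show False using assms(2) \<mu>0 unfolding A_def by simp
qed

lemma schur_coeff_eqI:
  assumes "is_schur_expansion n f c"
  shows "schur_coeff n f = c"
proof -
  have "(THE c. is_schur_expansion n f c) = c"
  proof (rule the1_equality)
    show "\<exists>!c. is_schur_expansion n f c"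
    proof (rule ex1I[of _ c])
      fix c' assume c': "is_schur_expansion n f c'"
      have "(\<lambda>\<mu>. c' \<mu> - c \<mu>) = (\<lambda>\<mu>. 0)"
      proof (rule schur_linear_independent)
        show "\<forall>\<mu>. \<mu> \<notin> partitions n \<longrightarrow> c' \<mu> - c \<mu> = 0"
          using c' assms unfolding is_schur_expansion_def by simp
        show "\<forall>\<alpha>. (\<Sum>\<mu>\<in>partitions n. (c' \<mu> - c \<mu>) * scoeff n \<mu> \<alpha>) = 0"
          using c' assms unfolding is_schur_expansion_def by (simp add: sum_subtractf left_diff_distrib)
      qed
      then show "c' = c" by (simp add: fun_eq_iff)
    qed (rule assms)
  qed (rule assms)
  then show ?thesis unfolding is_schur_expansion_def by (intro ext) (simp add: schur_coeff_def)
qed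

section \<open>Power sums\<close>

definition assignments :: "nat \<Rightarrow> nat set \<Rightarrow> (nat \<Rightarrow> nat) \<Rightarrow> (nat \<Rightarrow> nat) \<Rightarrow> (nat \<Rightarrow> nat) set" where
  "assignments N J wt \<alpha> = {f. (\<forall>j\<in>J. f j < N) \<and> (\<forall>j. j \<notin> J \<longrightarrow> f j = 0) \<and>
      (\<forall>i. (\<Sum>j\<in>{j\<in>J. f j = i}. wt j) = \<alpha> i)}"

definition n_assignments :: "nat \<Rightarrow> nat set \<Rightarrow> (nat \<Rightarrow> nat) \<Rightarrow> (nat \<Rightarrow> nat) \<Rightarrow> nat" where
  "n_assignments N J wt \<alpha> = card (assignments N J wt \<alpha>)"

lemma pcoeff_eq_n_assignments: "pcoeff N \<mu> \<alpha> = int (n_assignments N {..<length \<mu>} (nth \<mu>) \<alpha>)"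
proof -
  have "{f :: nat \<Rightarrow> nat.
      (\<forall>j. j < length \<mu> \<longrightarrow> f j < N) \<and> (\<forall>j. length \<mu> \<le> j \<longrightarrow> f j = 0) \<and>
      (\<forall>i. (\<Sum>j | j < length \<mu> \<and> f j = i. \<mu> ! j) = \<alpha> i)} = assignments N {..<length \<mu>} (nth \<mu>) \<alpha>"
    unfolding assignments_def by (auto simp: not_less)
  then show ?thesis unfolding pcoeff_def n_assignments_def by simp
qed

definition adj_transp :: "nat \<Rightarrow> nat \<Rightarrow> nat" where
  "adj_transp k x = (if x = k then Suc k else if x = Suc k then k else x)"

lemma adj_transp_adj_transp[simp]: "adj_transp k (adj_transp k x) = x" unfolding adj_transp_def by auto

lemma adj_swap_eq_adj_transp: "adj_swap k \<alpha> i = \<alpha> (adj_transp k i)" unfolding adj_swap_def adj_transp_def by auto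

lemma adj_transp_less: "Suc k < N \<Longrightarrow> x < N \<Longrightarrow> adj_transp k x < N" unfolding adj_transp_def by auto

definition assign_swap :: "nat \<Rightarrow> nat set \<Rightarrow> (nat \<Rightarrow> nat) \<Rightarrow> nat \<Rightarrow> nat" where
  "assign_swap k J f = (\<lambda>j. if j \<in> J then adj_transp k (f j) else 0)"

lemma assign_swap_in_assignments:
  assumes "f \<in> assignments N J wt \<alpha>" "Suc k < N"
  shows "assign_swap k J f \<in> assignments N J wt (adj_swap k \<alpha>)"
proof -
  have "{j \<in> J. assign_swap k J f j = i} = {j \<in> J. f j = adj_transp k i}" for i
    unfolding assign_swap_def by (auto simp: adj_transp_def split: if_splits)
  then show ?thesis using assms unfolding assignments_def adj_swap_eq_adj_transp by (auto simp: assign_swap_def adj_transp_less)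
qed

lemma assign_swap_involution: "f \<in> assignments N J wt \<alpha> \<Longrightarrow> assign_swap k J (assign_swap k J f) = f"
  unfolding assign_swap_def assignments_def by (auto simp: fun_eq_iff)

lemma n_assignments_adj_swap:
  assumes "Suc k < N"
  shows "n_assignments N J wt (adj_swap k \<alpha>) = n_assignments N J wt \<alpha>"
  unfolding n_assignments_def
proof (rule sym, rule bij_betw_same_card[of "assign_swap k J"], rule bij_betw_byWitness[where f' = "assign_swap k J"])
  show "\<forall>a\<in>assignments N J wt \<alpha>. assign_swap k J (assign_swap k J a) = a" using assign_swap_involution by blast
  show "\<forall>a\<in>assignments N J wt (adj_swap k \<alpha>). assign_swap k J (assign_swap k J a) = a" using assign_swap_involution by blast
  show "assign_swap k J ` assignments N J wt \<alpha> \<subseteq> assignments N J wt (adj_swap k \<alpha>)" using assign_swap_in_assignments assms by blast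
  show "assign_swap k J ` assignments N J wt (adj_swap k \<alpha>) \<subseteq> assignments N J wt \<alpha>"
    using assign_swap_in_assignments[of _ N J wt "adj_swap k \<alpha>" k] assms by auto
qed

lemma n_assignments_support:
  assumes "n_assignments N J wt \<alpha> \<noteq> 0" "finite J"
  shows "weak_comp N \<alpha> \<or> (\<Sum>j\<in>J. wt j) \<noteq> N"
proof -
  obtain f where f: "f \<in> assignments N J wt \<alpha>" using assms(1) unfolding n_assignments_def by fastforce
  have fl: "\<forall>j\<in>J. f j < N" and fc: "\<forall>i. (\<Sum>j\<in>{j\<in>J. f j = i}. wt j) = \<alpha> i"
    using f unfolding assignments_def by auto
  have out: "\<alpha> i = 0" if "N \<le> i" for i
  proof -
    have e: "{j\<in>J. f j = i} = {}" using fl that by fastforce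
    have "(\<Sum>j\<in>{j\<in>J. f j = i}. wt j) = 0" by (subst e) simp
    then show ?thesis using fc by simp
  qed
  have "psum N \<alpha> = (\<Sum>i<N. \<Sum>j\<in>{j\<in>J. f j = i}. wt j)" unfolding psum_def using fc by simp
  also have "\<dots> = (\<Sum>j\<in>J. wt j)"
  proof (rule sum.group)
    show "finite J" by (rule assms(2))
    show "finite {..<N}" by simp
    show "f ` J \<subseteq> {..<N}" using fl by auto
  qed
  finally show ?thesis using out unfolding weak_comp_def by auto
qed

lemma sym_hom_pcoeff:
  assumes "\<mu> \<in> partitions n"
  shows "sym_hom n (pcoeff n \<mu>)"
proof -
  have sl: "(\<Sum>j\<in>{..<length \<mu>}. \<mu> ! j) = n"
    using assms unfolding partitions_def is_partition_def by (simp add: sum_list_sum_nth atLeast0LessThan)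
  show ?thesis
    unfolding sym_hom_def
  proof (intro conjI allI impI)
    fix \<alpha> assume "pcoeff n \<mu> \<alpha> \<noteq> 0"
    then have "n_assignments n {..<length \<mu>} (nth \<mu>) \<alpha> \<noteq> 0" unfolding pcoeff_eq_n_assignments by simp
    from n_assignments_support[OF this] sl show "weak_comp n \<alpha>" by simp
  next
    fix k \<alpha> assume "Suc k < n"
    then show "pcoeff n \<mu> (adj_swap k \<alpha>) = pcoeff n \<mu> \<alpha>" unfolding pcoeff_eq_n_assignments using n_assignments_adj_swap by simp
  qed
qed

lemma sym_hom_psi:
  assumes "T \<subseteq> partitions n"
  shows "sym_hom n (psi n T)"
proof -
  have fT: "finite T" using finite_subset[OF assms finite_partitions] .
  have "sym_hom n (\<lambda>\<alpha>. (\<lambda>\<alpha>. 0) \<alpha> - (\<Sum>\<mu>\<in>T. (-1) * pcoeff n \<mu> \<alpha>))"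
  proof (rule sym_hom_diff_lincomb)
    show "sym_hom n (\<lambda>\<alpha>. 0)" unfolding sym_hom_def by simp
    show "\<And>\<mu>. \<mu> \<in> T \<Longrightarrow> sym_hom n (pcoeff n \<mu>)" using assms sym_hom_pcoeff by blast
  qed
  then show ?thesis unfolding psi_def by (simp add: sum_negf)
qed



section \<open>The coefficient of \<open>s\<^sub>(\<^sub>n\<^sub>-\<^sub>1\<^sub>,\<^sub>1\<^sub>)\<close>\<close>

lemma vec_of_list_single: "vec_of_list [a] = (\<lambda>i. if i = 0 then a else 0)"
  unfolding vec_of_list_def by (auto simp: fun_eq_iff)

lemma vec_of_list_pair: "vec_of_list [a, b] = (\<lambda>i. if i = 0 then a else if i = 1 then b else 0)"
  unfolding vec_of_list_def by (auto simp: fun_eq_iff nth_Cons split: nat.splits)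

lemma psum_1: "psum (Suc 0) a = a 0" unfolding psum_def by simp

lemma pos_list_sum_le_1:
  fixes r :: "nat list"
  assumes "\<forall>x\<in>set r. 0 < x" "sum_list r \<le> 1"
  shows "r = [] \<or> r = [1]"
proof (cases r)
  case Nil then show ?thesis by simp
next
  case (Cons a r')
  have "0 < a" "a + sum_list r' \<le> 1" using assms Cons by auto
  then have "a = 1" "sum_list r' = 0" by arith+
  then have "r' = []" using assms Cons by (cases r') auto
  then show ?thesis using Cons \<open>a = 1\<close> by simp
qed

lemma partition_large_first_part:
  assumes "\<nu> \<in> partitions n" "n - 1 \<le> vec_of_list \<nu> 0" "1 \<le> n"
  shows "\<nu> = [n] \<or> (\<nu> = [n - 1, 1] \<and> 2 \<le> n)"
proof -
  have ip: "is_partition n \<nu>" using assms unfolding partitions_def by simp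
  obtain x r where \<nu>: "\<nu> = x # r" using ip assms(3) unfolding is_partition_def by (cases \<nu>) auto
  have x: "x = vec_of_list \<nu> 0" unfolding \<nu> vec_of_list_def by simp
  have s: "x + sum_list r = n" using ip unfolding is_partition_def \<nu> by simp
  have pos: "\<forall>y\<in>set r. 0 < y" using ip unfolding is_partition_def \<nu> by simp
  have xpos: "0 < x" using ip unfolding is_partition_def \<nu> by simp
  have "sum_list r \<le> 1" using s assms(2) x by linarith
  then have "r = [] \<or> r = [1]" using pos_list_sum_le_1[OF pos] by simp
  then show ?thesis using s \<nu> xpos by auto
qed

lemma row_in_partitions: "1 \<le> n \<Longrightarrow> [n] \<in> partitions n"
  unfolding partitions_def is_partition_def by simp

lemma hook_in_partitions: "2 \<le> n \<Longrightarrow> [n - 1, 1] \<in> partitions n"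
  unfolding partitions_def is_partition_def by simp

lemma strip_chains_row:
  assumes "weak_comp n \<alpha>" "1 \<le> n"
  shows "strip_chains n (vec_of_list [n]) \<alpha> = {\<lambda>k i. if i = 0 then psum k \<alpha> else 0}"
proof -
  let ?G = "\<lambda>k i. if i = 0 then psum k \<alpha> else 0"
  have Pk: "N \<le> k \<Longrightarrow> psum k \<alpha> = psum N \<alpha>" if "N = n" for N k
    unfolding psum_def using assms(1) that by (intro sum.mono_neutral_right) (auto simp: weak_comp_def)
  have szG: "psum n (\<lambda>i. if i = 0 then x else 0) = x" for x
    unfolding psum_def using assms(2) by (cases n) (auto simp: lessThan_Suc_eq_insert_0)
  have sh: "is_shape n (vec_of_list [n])" unfolding is_shape_def vec_of_list_single using assms(2) by auto
  show ?thesis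
  proof
    show "{?G} \<subseteq> strip_chains n (vec_of_list [n]) \<alpha>"
      unfolding strip_chains_def
    proof (clarify, intro conjI allI impI)
      show "?G 0 = (\<lambda>i. 0)" unfolding psum_def by auto
    next
      fix k assume "n \<le> k"
      then show "?G k = vec_of_list [n]" unfolding vec_of_list_single using Pk[of n k] assms(1) unfolding weak_comp_def by auto
    next
      fix k assume "k < n"
      show "horiz_strip (?G k) (?G (Suc k))" unfolding horiz_strip_def psum_Suc by auto
    next
      fix k show "\<alpha> k = psum n (?G (Suc k)) - psum n (?G k)" unfolding szG psum_Suc by simp
    qed
    show "strip_chains n (vec_of_list [n]) \<alpha> \<subseteq> {?G}"
    proof
      fix G assume G: "G \<in> strip_chains n (vec_of_list [n]) \<alpha>"
      have "G k i = ?G k i" for k i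
      proof (cases "i = 0")
        case False
        then show ?thesis using strip_chain_le[OF G, of k i] unfolding vec_of_list_single by simp
      next
        case True
        have "G k j = (if j = 0 then G k 0 else 0)" for j
          using strip_chain_le[OF G, of k j] unfolding vec_of_list_single by (cases "j = 0") auto
        then have "G k = (\<lambda>i. if i = 0 then G k 0 else 0)" by (auto simp: fun_eq_iff)
        then have "psum n (G k) = G k 0" using szG by metis
        then show ?thesis using strip_chain_psum[OF G, of k] True by simp
      qed
      then show "G \<in> {?G}" by (auto simp: fun_eq_iff)
    qed
  qed
qed

lemma kostka_row:
  assumes "weak_comp n \<alpha>" "1 \<le> n"
  shows "kostka n (vec_of_list [n]) \<alpha> = 1"
proof -
  have sh: "is_shape n (vec_of_list [n])" unfolding is_shape_def vec_of_list_single using assms(2) by auto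
  show ?thesis using kostka_eq_card_strip_chains[OF sh] strip_chains_row[OF assms] by simp
qed

lemma scoeff_at_row:
  assumes "\<nu> \<in> partitions n" "2 \<le> n"
  shows "scoeff n \<nu> (vec_of_list [n]) = (if \<nu> = [n] then 1 else 0)"
proof (cases "scoeff n \<nu> (vec_of_list [n]) = 0")
  case False
  have sh: "is_shape n (vec_of_list \<nu>)" using assms is_shape_vec_of_partition unfolding partitions_def by simp
  have "psum (Suc 0) (vec_of_list [n]) \<le> psum (Suc 0) (vec_of_list \<nu>)" using kostka_dominance[OF _ sh] False unfolding scoeff_eq_kostka by simp
  then have "n \<le> vec_of_list \<nu> 0" unfolding psum_1 vec_of_list_single by simp
  moreover have "\<nu> = [n] \<or> \<nu> = [n - 1, 1]" using partition_large_first_part[OF assms(1)] assms(2) calculation by fastforce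
  ultimately have "\<nu> = [n]" using assms(2) by (auto simp: vec_of_list_pair)
  then show ?thesis using scoeff_diag[OF row_in_partitions] assms(2) by simp
next
  case True
  moreover have "\<nu> \<noteq> [n]" using True scoeff_diag[OF row_in_partitions, of n] assms(2) by auto
  ultimately show ?thesis by simp
qed

lemma scoeff_at_hook:
  assumes "\<nu> \<in> partitions n" "2 \<le> n"
  shows "scoeff n \<nu> (vec_of_list [n - 1, 1]) = (if \<nu> = [n] \<or> \<nu> = [n - 1, 1] then 1 else 0)"
proof -
  have D: "weak_comp n (vec_of_list [n - 1, 1])" using weak_comp_vec_of_partition[OF hook_in_partitions[OF assms(2)]] .
  have r: "scoeff n [n] (vec_of_list [n - 1, 1]) = 1" unfolding scoeff_eq_kostka using kostka_row[OF D] assms(2) by simp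
  have h: "scoeff n [n - 1, 1] (vec_of_list [n - 1, 1]) = 1" using scoeff_diag[OF hook_in_partitions[OF assms(2)]] .
  show ?thesis
  proof (cases "scoeff n \<nu> (vec_of_list [n - 1, 1]) = 0")
    case False
    have sh: "is_shape n (vec_of_list \<nu>)" using assms is_shape_vec_of_partition unfolding partitions_def by simp
    have "psum (Suc 0) (vec_of_list [n - 1, 1]) \<le> psum (Suc 0) (vec_of_list \<nu>)" using kostka_dominance[OF _ sh] False unfolding scoeff_eq_kostka by simp
    then have "n - 1 \<le> vec_of_list \<nu> 0" unfolding psum_1 vec_of_list_pair by simp
    then have "\<nu> = [n] \<or> \<nu> = [n - 1, 1]" using partition_large_first_part[OF assms(1)] assms(2) by fastforce
    then show ?thesis using r h by auto
  next
    case True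
    then have "\<nu> \<noteq> [n] \<and> \<nu> \<noteq> [n - 1, 1]" using r h by auto
    with True show ?thesis by simp
  qed
qed

lemma schur_expansion_hook_coeff:
  assumes "is_schur_expansion n f c" "2 \<le> n"
  shows "c [n - 1, 1] = f (vec_of_list [n - 1, 1]) - f (vec_of_list [n])"
proof -
  have "f (vec_of_list [n - 1, 1]) - f (vec_of_list [n]) =
      (\<Sum>\<nu>\<in>partitions n. c \<nu> * (scoeff n \<nu> (vec_of_list [n - 1, 1]) - scoeff n \<nu> (vec_of_list [n])))"
    using assms(1) unfolding is_schur_expansion_def by (simp add: sum_subtractf right_diff_distrib)
  also have "\<dots> = c [n - 1, 1] * (scoeff n [n - 1, 1] (vec_of_list [n - 1, 1]) - scoeff n [n - 1, 1] (vec_of_list [n]))"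
  proof (rule sum_eq_single[OF finite_partitions hook_in_partitions[OF assms(2)]], rule ballI)
    fix \<nu> assume "\<nu> \<in> partitions n - {[n - 1, 1]}"
    then show "c \<nu> * (scoeff n \<nu> (vec_of_list [n - 1, 1]) - scoeff n \<nu> (vec_of_list [n])) = 0"
      using scoeff_at_row[of \<nu> n] scoeff_at_hook[of \<nu> n] assms(2) by auto
  qed
  also have "\<dots> = c [n - 1, 1]"
    using scoeff_at_row[OF hook_in_partitions[OF assms(2)] assms(2)] scoeff_at_hook[OF hook_in_partitions[OF assms(2)] assms(2)]
      assms(2) by auto
  finally show ?thesis by simp
qed


lemma sum_fiber_pos:
  assumes "finite J" "j \<in> J" "f j = i" "\<forall>j\<in>J. 0 < (wt j :: nat)"
  shows "0 < (\<Sum>j'\<in>{j'\<in>J. f j' = i}. wt j')"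
proof -
  have "wt j \<le> (\<Sum>j'\<in>{j'\<in>J. f j' = i}. wt j')"
    by (rule member_le_sum) (use assms in auto)
  then show ?thesis using assms by (metis gr0I le_zero_eq)
qed

lemma assignments_row:
  assumes "finite J" "\<forall>j\<in>J. 0 < wt j" "sum wt J = n" "1 \<le> n"
  shows "assignments n J wt (vec_of_list [n]) = {\<lambda>j. 0}"
proof
  show "assignments n J wt (vec_of_list [n]) \<subseteq> {\<lambda>j. 0}"
  proof
    fix f assume f: "f \<in> assignments n J wt (vec_of_list [n])"
    have "f j = 0" for j
    proof (cases "j \<in> J")
      case False then show ?thesis using f unfolding assignments_def by auto
    next
      case True
      show ?thesis
      proof (rule ccontr)
        assume "f j \<noteq> 0"
        then have "(\<Sum>j'\<in>{j'\<in>J. f j' = f j}. wt j') = 0"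
          using f unfolding assignments_def vec_of_list_single by auto
        with sum_fiber_pos[OF assms(1) True, of f "f j" wt] assms(2) show False by simp
      qed
    qed
    then show "f \<in> {\<lambda>j. 0}" by (auto simp: fun_eq_iff)
  qed
  show "{\<lambda>j. 0} \<subseteq> assignments n J wt (vec_of_list [n])"
    using assms unfolding assignments_def vec_of_list_single by auto
qed

lemma n_assignments_row:
  assumes "finite J" "\<forall>j\<in>J. 0 < wt j" "sum wt J = n" "1 \<le> n"
  shows "n_assignments n J wt (vec_of_list [n]) = 1"
  unfolding n_assignments_def assignments_row[OF assms] by simp

lemma pos_sum_eq_1_imp_singleton:
  assumes "finite B" "\<forall>j\<in>B. 0 < (wt j :: nat)" "sum wt B = 1"
  shows "\<exists>j0. B = {j0} \<and> wt j0 = 1"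
proof -
  have "B \<noteq> {}" using assms(3) by auto
  then obtain j0 where j0: "j0 \<in> B" by auto
  have "sum wt B = wt j0 + sum wt (B - {j0})" using sum.remove[OF assms(1) j0] .
  then have a: "wt j0 = 1" "sum wt (B - {j0}) = 0" using assms(2,3) j0 by fastforce+
  have "B - {j0} = {}"
  proof (rule ccontr)
    assume "B - {j0} \<noteq> {}"
    then obtain j1 where "j1 \<in> B - {j0}" by auto
    then show False using a(2) assms(1,2) by (metis Diff_iff finite_Diff less_irrefl sum_eq_0_iff)
  qed
  then have "B = {j0}" using j0 by auto
  then show ?thesis using a by blast
qed

definition unit_at :: "nat \<Rightarrow> nat \<Rightarrow> nat" where
  "unit_at j0 = (\<lambda>j. if j = j0 then 1 else 0)"

lemma assignments_hook:
  assumes "finite J" "\<forall>j\<in>J. 0 < wt j" "sum wt J = n" "2 \<le> n"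
  shows "assignments n J wt (vec_of_list [n - 1, 1]) = unit_at ` {j\<in>J. wt j = 1}"
proof
  show "assignments n J wt (vec_of_list [n - 1, 1]) \<subseteq> unit_at ` {j\<in>J. wt j = 1}"
  proof
    fix f assume f: "f \<in> assignments n J wt (vec_of_list [n - 1, 1])"
    have fc: "(\<Sum>j'\<in>{j'\<in>J. f j' = i}. wt j') = vec_of_list [n - 1, 1] i" for i
      using f unfolding assignments_def by auto
    have big: "f j \<le> 1" if "j \<in> J" for j
    proof (rule ccontr)
      assume "\<not> f j \<le> 1"
      then have "(\<Sum>j'\<in>{j'\<in>J. f j' = f j}. wt j') = 0" using fc[of "f j"] unfolding vec_of_list_pair by simp
      with sum_fiber_pos[OF assms(1) that, of f "f j" wt] assms(2) show False by simp
    qed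
    have "sum wt {j'\<in>J. f j' = 1} = 1" using fc[of 1] unfolding vec_of_list_pair by simp
    then obtain j0 where j0: "{j'\<in>J. f j' = 1} = {j0}" "wt j0 = 1"
      using pos_sum_eq_1_imp_singleton[of "{j'\<in>J. f j' = 1}" wt] assms(1,2) by auto
    have j0J: "j0 \<in> J" using j0(1) by auto
    have "f = unit_at j0"
    proof
      fix j show "f j = unit_at j0 j"
      proof (cases "j \<in> J")
        case False
        then have "j \<noteq> j0" using j0J by auto
        then show ?thesis using False f unfolding assignments_def unit_at_def by auto
      next
        case True
        then show ?thesis using big[OF True] j0(1) unfolding unit_at_def by (cases "f j = 1") auto
      qed
    qed
    then show "f \<in> unit_at ` {j\<in>J. wt j = 1}" using j0J j0(2) by auto
  qed
  show "unit_at ` {j\<in>J. wt j = 1} \<subseteq> assignments n J wt (vec_of_list [n - 1, 1])"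
  proof
    fix f assume "f \<in> unit_at ` {j\<in>J. wt j = 1}"
    then obtain j0 where j0: "j0 \<in> J" "wt j0 = 1" "f = unit_at j0" by auto
    have s0: "sum wt (J - {j0}) = n - 1" using sum.remove[OF assms(1) j0(1), of wt] assms(3) j0(2) by simp
    have "(\<Sum>j'\<in>{j'\<in>J. f j' = i}. wt j') = vec_of_list [n - 1, 1] i" for i
    proof -
      consider "i = 0" | "i = 1" | "1 < i" by linarith
      then show ?thesis
      proof cases
        case 1
        have "{j'\<in>J. f j' = i} = J - {j0}" using 1 j0 unfolding unit_at_def by auto
        then show ?thesis using s0 1 unfolding vec_of_list_pair by simp
      next
        case 2
        have "{j'\<in>J. f j' = i} = {j0}" using 2 j0 unfolding unit_at_def by auto
        then show ?thesis using j0 2 unfolding vec_of_list_pair by simp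
      next
        case 3
        have e: "{j'\<in>J. f j' = i} = {}" using 3 j0 unfolding unit_at_def by auto
        show ?thesis using 3 unfolding vec_of_list_pair by (subst e) simp
      qed
    qed
    then show "f \<in> assignments n J wt (vec_of_list [n - 1, 1])"
      using j0 assms(4) unfolding assignments_def unit_at_def by auto
  qed
qed

lemma n_assignments_hook:
  assumes "finite J" "\<forall>j\<in>J. 0 < wt j" "sum wt J = n" "2 \<le> n"
  shows "n_assignments n J wt (vec_of_list [n - 1, 1]) = card {j\<in>J. wt j = 1}"
proof -
  have "inj_on unit_at {j\<in>J. wt j = 1}"
    unfolding unit_at_def inj_on_def by (metis zero_neq_one)
  then show ?thesis unfolding n_assignments_def assignments_hook[OF assms] by (simp add: card_image)
qed

definition chi_hook :: "nat list \<Rightarrow> int" where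
  "chi_hook \<mu> = int (count_list \<mu> 1) - 1"

lemma card_indices_eq_count_list: "card {j\<in>{..<length xs}. xs ! j = x} = count_list xs x"
  unfolding count_list_eq_length_filter length_filter_conv_card by (rule arg_cong[where f = card]) auto

lemma partition_parts_props:
  assumes "\<mu> \<in> partitions n"
  shows "finite {..<length \<mu>}" "\<forall>j\<in>{..<length \<mu>}. 0 < \<mu> ! j" "sum (nth \<mu>) {..<length \<mu>} = n"
  using assms unfolding partitions_def is_partition_def
  by (auto simp: sum_list_sum_nth atLeast0LessThan)

lemma schur_coeff_psi_hook:
  assumes "T \<subseteq> partitions n" "2 \<le> n"
  shows "schur_coeff n (psi n T) [n - 1, 1] = (\<Sum>\<mu>\<in>T. chi_hook \<mu>)"
proof -
  obtain c where c: "is_schur_expansion n (psi n T) c" using schur_expansion_exists[OF sym_hom_psi[OF assms(1)]] by blast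
  have "schur_coeff n (psi n T) [n - 1, 1] = c [n - 1, 1]" unfolding schur_coeff_eqI[OF c] ..
  also have "\<dots> = psi n T (vec_of_list [n - 1, 1]) - psi n T (vec_of_list [n])" using schur_expansion_hook_coeff[OF c assms(2)] .
  also have "\<dots> = (\<Sum>\<mu>\<in>T. pcoeff n \<mu> (vec_of_list [n - 1, 1]) - pcoeff n \<mu> (vec_of_list [n]))"
    unfolding psi_def by (simp add: sum_subtractf)
  also have "\<dots> = (\<Sum>\<mu>\<in>T. chi_hook \<mu>)"
  proof (rule sum.cong[OF refl])
    fix \<mu> assume "\<mu> \<in> T"
    then have m: "\<mu> \<in> partitions n" using assms(1) by auto
    show "pcoeff n \<mu> (vec_of_list [n - 1, 1]) - pcoeff n \<mu> (vec_of_list [n]) = chi_hook \<mu>"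
      unfolding pcoeff_eq_n_assignments chi_hook_def card_indices_eq_count_list[symmetric]
      using n_assignments_hook[OF partition_parts_props[OF m] assms(2)] n_assignments_row[OF partition_parts_props[OF m]] assms(2) by simp
  qed
  finally show ?thesis .
qed



section \<open>Partitions without a part \<open>1\<close>\<close>

function part_enum :: "nat \<Rightarrow> nat \<Rightarrow> nat list list" where
  "part_enum n m = (if n = 0 then [[]] else concat (map (\<lambda>k. map (Cons k) (part_enum (n - k) k)) [1..<Suc (min n m)]))"
  by pat_completeness auto
termination by (relation "measure fst") auto

declare part_enum.simps[simp del]

lemma part_enum_complete:
  "is_partition n xs \<Longrightarrow> (\<forall>x\<in>set xs. x \<le> m) \<Longrightarrow> xs \<in> set (part_enum n m)"
proof (induction n m arbitrary: xs rule: part_enum.induct)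
  case (1 n m)
  show ?case
  proof (cases "n = 0")
    case True
    then have "xs = []" using 1(2) unfolding is_partition_def by (cases xs) auto
    moreover have "part_enum n m = [[]]" by (simp only: part_enum.simps[of n m] if_P[OF True])
    ultimately show ?thesis by simp
  next
    case False
    then obtain k r where xs: "xs = k # r" using 1(2) unfolding is_partition_def by (cases xs) auto
    have kpos: "0 < k" and kn: "k \<le> n" and km: "k \<le> m" using 1(2,3) xs unfolding is_partition_def by auto
    have sr: "sorted (rev r)" "\<forall>x\<in>set r. x \<le> k"
      using 1(2) xs unfolding is_partition_def by (auto simp: sorted_append)
    have part: "is_partition (n - k) r" using 1(2) xs sr unfolding is_partition_def by auto
    have kin: "k \<in> set [1..<Suc (min n m)]" using kpos kn km by auto
    have "r \<in> set (part_enum (n - k) k)" by (rule 1(1)[OF False kin part sr(2)])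
    then have a: "k # r \<in> set (map (Cons k) (part_enum (n - k) k))" by simp
    have b: "map (Cons k) (part_enum (n - k) k) \<in> set (map (\<lambda>k. map (Cons k) (part_enum (n - k) k)) [1..<Suc (min n m)])"
      unfolding set_map by (rule imageI[OF kin])
    have "k # r \<in> set (concat (map (\<lambda>k. map (Cons k) (part_enum (n - k) k)) [1..<Suc (min n m)]))"
      unfolding set_concat using b a by (rule UN_I)
    moreover have g: "part_enum n m = concat (map (\<lambda>k. map (Cons k) (part_enum (n - k) k)) [1..<Suc (min n m)])"
      by (simp only: part_enum.simps[of n m] if_not_P[OF False])
    ultimately show ?thesis unfolding xs by (simp only:)
  qed
qed

lemma part_enum_numeral: "part_enum (numeral v) m = concat (map (\<lambda>k. map (Cons k) (part_enum (numeral v - k) k)) [1..<Suc (min (numeral v) m)])"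
  by (simp only: part_enum.simps[of "numeral v" m] if_not_P[OF zero_neq_numeral[symmetric]])

lemma part_enum_1: "part_enum 1 m = concat (map (\<lambda>k. map (Cons k) (part_enum (1 - k) k)) [1..<Suc (min 1 m)])"
  by (simp only: part_enum.simps[of 1 m] if_not_P[OF one_neq_zero])

lemma part_enum_Suc: "part_enum (Suc n) m = concat (map (\<lambda>k. map (Cons k) (part_enum (Suc n - k) k)) [1..<Suc (min (Suc n) m)])"
  by (simp only: part_enum.simps[of "Suc n" m] if_not_P[OF Suc_not_Zero])

lemma part_enum_0: "part_enum 0 m = [[]]"
  by (simp only: part_enum.simps[of 0 m] if_P[OF refl])


lemma card_partitions_without_1_small:
  assumes "2 \<le> n" "n \<le> 9"
  shows "card {\<mu>\<in>partitions n. 1 \<notin> set \<mu>} \<le> n - 1"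
proof -
  have sub: "{\<mu>\<in>partitions n. 1 \<notin> set \<mu>} \<subseteq> set (filter (\<lambda>xs. 1 \<notin> set xs) (part_enum n n))"
  proof
    fix \<mu> assume "\<mu> \<in> {\<mu>\<in>partitions n. 1 \<notin> set \<mu>}"
    then have h: "is_partition n \<mu>" "1 \<notin> set \<mu>" unfolding partitions_def by auto
    have "\<forall>x\<in>set \<mu>. x \<le> n"
    proof
      fix x assume "x \<in> set \<mu>"
      then have "x \<le> sum_list \<mu>" by (rule member_le_sum_list) auto
      then show "x \<le> n" using h(1) unfolding is_partition_def by simp
    qed
    then show "\<mu> \<in> set (filter (\<lambda>xs. 1 \<notin> set xs) (part_enum n n))" using part_enum_complete[OF h(1)] h(2) by auto
  qed
  have "card {\<mu>\<in>partitions n. 1 \<notin> set \<mu>} \<le> card (set (filter (\<lambda>xs. 1 \<notin> set xs) (part_enum n n)))"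
    by (rule card_mono[OF _ sub]) simp
  also have "\<dots> \<le> length (filter (\<lambda>xs. 1 \<notin> set xs) (part_enum n n))" by (rule card_length)
  also have "\<dots> \<le> n - 1"
  proof -
    consider "n = 2" | "n = 3" | "n = 4" | "n = 5" | "n = 6" | "n = 7" | "n = 8" | "n = 9"
      using assms by linarith
    then show ?thesis by cases (simp_all add: part_enum_numeral part_enum_1 part_enum_0 part_enum_Suc upt_rec)
  qed
  finally show ?thesis .
qed


lemma column_in_partitions: "replicate n 1 \<in> partitions n"
  unfolding partitions_def is_partition_def by (simp add: sum_list_replicate)

lemma chi_hook_column: "chi_hook (replicate n 1) = int n - 1"
  unfolding chi_hook_def by (simp add: count_list_eq_length_filter filter_replicate)

lemma chi_hook_ge: "chi_hook \<mu> \<ge> (if 1 \<in> set \<mu> then 0 else -1)"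
  unfolding chi_hook_def using count_list_0_iff[of \<mu> 1] by auto

lemma hook_sum_nonneg_small:
  assumes T: "T \<subseteq> partitions n" "replicate n 1 \<in> T" and n: "2 \<le> n" "n \<le> 9"
  shows "0 \<le> (\<Sum>\<mu>\<in>T. chi_hook \<mu>)"
proof -
  let ?r = "replicate n (1::nat)" and ?W = "{\<mu>\<in>partitions n. 1 \<notin> set \<mu>}"
  have fT: "finite T" using finite_subset[OF T(1) finite_partitions] .
  have "(\<Sum>\<mu>\<in>T - {?r}. if 1 \<in> set \<mu> then 0 else -1) \<le> (\<Sum>\<mu>\<in>T - {?r}. chi_hook \<mu>)"
    using chi_hook_ge by (intro sum_mono) simp
  moreover have "(T - {?r}) \<inter> - {\<mu>. 1 \<in> set \<mu>} = (T - {?r}) \<inter> ?W" using T(1) by auto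
  then have "(\<Sum>\<mu>\<in>T - {?r}. if 1 \<in> set \<mu> then 0 else -1) = - int (card ((T - {?r}) \<inter> ?W))"
    using fT by (simp add: sum.If_cases)
  moreover have "card ((T - {?r}) \<inter> ?W) \<le> card ?W" by (rule card_mono) (simp_all add: finite_partitions)
  moreover have "(\<Sum>\<mu>\<in>T. chi_hook \<mu>) = (int n - 1) + (\<Sum>\<mu>\<in>T - {?r}. chi_hook \<mu>)"
    using sum.remove[OF fT T(2), of chi_hook] chi_hook_column[of n] by simp
  ultimately show ?thesis using card_partitions_without_1_small[OF n] n by linarith
qed

definition no_one_family :: "nat \<Rightarrow> nat list set" where
  "no_one_family n = {[n], [n - 6, 2, 2, 2]} \<union> (\<lambda>a. [n - a, a]) ` {2..n div 2} \<union>
     (\<lambda>a. [n - a - 2, a, 2]) ` {2..(n - 2) div 2} \<union> (\<lambda>a. [n - a - 3, a, 3]) ` {3..(n - 3) div 2}"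

lemma no_one_family_partitions:
  assumes "10 \<le> n" "\<mu> \<in> no_one_family n"
  shows "\<mu> \<in> partitions n" "1 \<notin> set \<mu>"
  using assms unfolding no_one_family_def partitions_def is_partition_def by auto

lemma card_no_one_family:
  assumes "10 \<le> n"
  shows "n \<le> card (no_one_family n)"
proof -
  let ?A = "{[n], [n - 6, 2, 2, 2]}"
  let ?B = "(\<lambda>a. [n - a, a]) ` {2..n div 2}"
  let ?C = "(\<lambda>a. [n - a - 2, a, 2]) ` {2..(n - 2) div 2}"
  let ?D = "(\<lambda>a. [n - a - 3, a, 3]) ` {3..(n - 3) div 2}"
  have "card ?A = 2" by simp
  moreover have "card ?B = n div 2 - 1" by (subst card_image) (auto simp: inj_on_def)
  moreover have "card ?C = (n - 2) div 2 - 1" by (subst card_image) (auto simp: inj_on_def)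
  moreover have "card ?D = (n - 3) div 2 - 2" by (subst card_image) (auto simp: inj_on_def)
  moreover have "?A \<inter> ?B = {}" "(?A \<union> ?B) \<inter> ?C = {}" "(?A \<union> ?B \<union> ?C) \<inter> ?D = {}"
    using assms by auto
  then have "card (no_one_family n) = card ?A + card ?B + card ?C + card ?D"
    unfolding no_one_family_def
    using card_Un_disjoint[of "?A \<union> ?B \<union> ?C" ?D] card_Un_disjoint[of "?A \<union> ?B" ?C]
      card_Un_disjoint[of ?A ?B] by simp
  moreover have "n \<le> 2 + (n div 2 - 1) + ((n - 2) div 2 - 1) + ((n - 3) div 2 - 2)"
    using assms by presburger
  ultimately show ?thesis by simp
qed

theorem hook_coeff_negative_iff:
  assumes n: "2 \<le> n"
  shows "(\<exists>T. T \<subseteq> partitions n \<and> replicate n 1 \<in> T \<and> schur_coeff n (psi n T) [n - 1, 1] < 0)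
    \<longleftrightarrow> 10 \<le> n"
proof
  assume "\<exists>T. T \<subseteq> partitions n \<and> replicate n 1 \<in> T \<and> schur_coeff n (psi n T) [n - 1, 1] < 0"
  then obtain T where T: "T \<subseteq> partitions n" "replicate n 1 \<in> T" "schur_coeff n (psi n T) [n - 1, 1] < 0"
    by blast
  show "10 \<le> n"
  proof (rule ccontr)
    assume "\<not> 10 \<le> n"
    then have "0 \<le> (\<Sum>\<mu>\<in>T. chi_hook \<mu>)" using hook_sum_nonneg_small[OF T(1,2) n] by simp
    then show False using T(3) schur_coeff_psi_hook[OF T(1) n] by simp
  qed
next
  assume n10: "10 \<le> n"
  let ?r = "replicate n (1::nat)"
  let ?T = "insert ?r (no_one_family n)"
  have "?r \<notin> no_one_family n" using no_one_family_partitions(2)[OF n10] n10 by fastforce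
  moreover have "finite (no_one_family n)" unfolding no_one_family_def by simp
  ultimately have "(\<Sum>\<mu>\<in>?T. chi_hook \<mu>) = chi_hook ?r + (\<Sum>\<mu>\<in>no_one_family n. chi_hook \<mu>)" by simp
  also have "(\<Sum>\<mu>\<in>no_one_family n. chi_hook \<mu>) = (\<Sum>\<mu>\<in>no_one_family n. -1)"
    using no_one_family_partitions(2)[OF n10] by (intro sum.cong) (auto simp: chi_hook_def)
  finally have "(\<Sum>\<mu>\<in>?T. chi_hook \<mu>) < 0"
    using chi_hook_column[of n] card_no_one_family[OF n10] by simp
  moreover have "?T \<subseteq> partitions n" using no_one_family_partitions(1)[OF n10] column_in_partitions by auto
  ultimately have "schur_coeff n (psi n ?T) [n - 1, 1] < 0" using schur_coeff_psi_hook[OF _ n] by simp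
  then show "\<exists>T. T \<subseteq> partitions n \<and> replicate n 1 \<in> T \<and> schur_coeff n (psi n T) [n - 1, 1] < 0"
    using \<open>?T \<subseteq> partitions n\<close> by blast
qed

section \<open>Alternating sums over compositions\<close>

definition compositions :: "nat \<Rightarrow> nat list set" where
  "compositions m = {xs. (\<forall>x\<in>set xs. 0 < x) \<and> sum_list xs = m}"

lemma compositions_length_le: "xs \<in> compositions m \<Longrightarrow> length xs \<le> m"
  unfolding compositions_def using length_le_sum_list_pos by blast

lemma finite_compositions: "finite (compositions m)"
proof -
  have "compositions m \<subseteq> {xs. set xs \<subseteq> {..m} \<and> length xs \<le> m}"
  proof
    fix xs assume h: "xs \<in> compositions m"
    have "set xs \<subseteq> {..m}"
    proof
      fix x assume "x \<in> set xs"
      then have "x \<le> sum_list xs" by (rule member_le_sum_list) auto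
      then show "x \<in> {..m}" using h unfolding compositions_def by simp
    qed
    then show "xs \<in> {xs. set xs \<subseteq> {..m} \<and> length xs \<le> m}" using compositions_length_le[OF h] by simp
  qed
  moreover have "finite {xs. set xs \<subseteq> {..m} \<and> length xs \<le> m}"
    using finite_lists_length_le[of "{..m}" m] by simp
  ultimately show ?thesis by (rule finite_subset)
qed

lemma compositions_0: "compositions 0 = {[]}"
  unfolding compositions_def by (auto, case_tac x, auto)

lemma bij_betw_compositions_snoc:
  assumes "0 < m"
  shows "bij_betw (\<lambda>(a, xs). xs @ [a]) (Sigma {1..m} (\<lambda>a. compositions (m - a))) (compositions m)"
proof (rule bij_betwI')
  fix x y assume "x \<in> Sigma {1..m} (\<lambda>a. compositions (m - a))" "y \<in> Sigma {1..m} (\<lambda>a. compositions (m - a))"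
  show "((\<lambda>(a, xs). xs @ [a]) x = (\<lambda>(a, xs). xs @ [a]) y) = (x = y)"
    by (cases x; cases y) auto
next
  fix x assume "x \<in> Sigma {1..m} (\<lambda>a. compositions (m - a))"
  then show "(\<lambda>(a, xs). xs @ [a]) x \<in> compositions m" unfolding compositions_def by auto
next
  fix ys assume ys: "ys \<in> compositions m"
  then have "ys \<noteq> []" using assms unfolding compositions_def by auto
  then have e: "ys = butlast ys @ [last ys]" by simp
  have "0 < last ys" using ys \<open>ys \<noteq> []\<close> unfolding compositions_def by auto
  moreover have "sum_list ys = sum_list (butlast ys) + last ys" using e by (metis sum_list_append sum_list_simps add.right_neutral)
  moreover have "\<forall>x\<in>set (butlast ys). 0 < x" using ys unfolding compositions_def by (auto dest: in_set_butlastD)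
  ultimately have "(last ys, butlast ys) \<in> Sigma {1..m} (\<lambda>a. compositions (m - a))"
    using ys unfolding compositions_def by auto
  then show "\<exists>x\<in>Sigma {1..m} (\<lambda>a. compositions (m - a)). ys = (\<lambda>(a, xs). xs @ [a]) x"
    using e by force
qed

lemma sum_compositions_snoc:
  assumes "0 < m"
  shows "(\<Sum>xs\<in>compositions m. F xs) = (\<Sum>a\<in>{1..m}. \<Sum>xs\<in>compositions (m - a). F (xs @ [a]))"
proof -
  have "(\<Sum>xs\<in>compositions m. F xs) = (\<Sum>p\<in>Sigma {1..m} (\<lambda>a. compositions (m - a)). F ((\<lambda>(a, xs). xs @ [a]) p))"
    using sum.reindex_bij_betw[OF bij_betw_compositions_snoc[OF assms], of F] by simp
  also have "\<dots> = (\<Sum>a\<in>{1..m}. \<Sum>xs\<in>compositions (m - a). F (xs @ [a]))"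
    by (subst sum.Sigma) (auto simp: finite_compositions split_beta)
  finally show ?thesis .
qed

lemma sum_Pow_minus_one:
  assumes "finite J" "J \<noteq> {}"
  shows "(\<Sum>B\<in>Pow J. (-1::int) ^ card B) = 0"
  using assms card_subsupersets_even_odd[of J "{}"] unfolding Pow_def
  by (intro sum_alternating_cancels) auto

lemma finite_funs_support:
  assumes "finite J" "finite V"
  shows "finite {f :: nat \<Rightarrow> 'a. (\<forall>j\<in>J. f j \<in> V) \<and> (\<forall>j. j \<notin> J \<longrightarrow> f j = d)}"
  using assms(1)
proof (induction J rule: finite_induct)
  case empty
  have "{f :: nat \<Rightarrow> 'a. (\<forall>j\<in>{}. f j \<in> V) \<and> (\<forall>j. j \<notin> {} \<longrightarrow> f j = d)} = {\<lambda>j. d}" by auto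
  then show ?case by simp
next
  case (insert x J)
  let ?S = "{f :: nat \<Rightarrow> 'a. (\<forall>j\<in>J. f j \<in> V) \<and> (\<forall>j. j \<notin> J \<longrightarrow> f j = d)}"
  have "{f :: nat \<Rightarrow> 'a. (\<forall>j\<in>insert x J. f j \<in> V) \<and> (\<forall>j. j \<notin> insert x J \<longrightarrow> f j = d)}
      \<subseteq> (\<lambda>(f, v). f(x := v)) ` (?S \<times> V)"
  proof
    fix f assume f: "f \<in> {f :: nat \<Rightarrow> 'a. (\<forall>j\<in>insert x J. f j \<in> V) \<and> (\<forall>j. j \<notin> insert x J \<longrightarrow> f j = d)}"
    have "(f(x := d), f x) \<in> ?S \<times> V" using f insert.hyps(2) by auto
    moreover have "f = (\<lambda>(f, v). f(x := v)) (f(x := d), f x)" by auto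
    ultimately show "f \<in> (\<lambda>(f, v). f(x := v)) ` (?S \<times> V)" by blast
  qed
  moreover have "finite ((\<lambda>(f, v). f(x := v)) ` (?S \<times> V))" using insert.IH assms(2) by simp
  ultimately show ?case by (rule finite_subset)
qed

lemma alt_sum_compositions_snoc:
  assumes "0 < m"
  shows "(\<Sum>xs\<in>compositions m. (-1::int) ^ length xs * F xs)
    = - (\<Sum>a\<in>{1..m}. \<Sum>xs\<in>compositions (m - a). (-1) ^ length xs * F (xs @ [a]))"
  using sum_compositions_snoc[OF assms, of "\<lambda>xs. (-1::int) ^ length xs * F xs"] by (simp add: sum_negf)


text \<open>
  A chain with content \<open>xs @ [a]\<close> is a chain with content \<open>xs\<close> ending at some \<open>\<rho>\<close>, followed by
  a horizontal strip of size \<open>a\<close> from \<open>\<rho>\<close> to \<open>lam\<close>; this gives the recursion \<open>kostka_snoc\<close>.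
\<close>

lemma vec_of_list_snoc: "vec_of_list (xs @ [a]) k = (if k < length xs then vec_of_list xs k else if k = length xs then a else 0)"
  unfolding vec_of_list_def by (auto simp: nth_append)

lemma strip_chain_const:
  assumes G: "G \<in> strip_chains N lam \<alpha>" and sh: "is_shape N lam" and z: "\<alpha> k = 0"
  shows "G (Suc k) = G k"
proof -
  have s: "psum N (G (Suc k)) = psum N (G k)" using strip_chain_psum_Suc[OF G, of k] z by simp
  have le: "G k i \<le> G (Suc k) i" for i by (rule strip_chain_mono_Suc[OF G])
  have out: "N \<le> i \<Longrightarrow> G j i = 0" for i j using strip_chain_le[OF G, of j i] sh unfolding is_shape_def by simp
  show ?thesis
  proof
    fix i show "G (Suc k) i = G k i"
    proof (cases "i < N")
      case True
      then show ?thesis using sum_mono_inv[of "G k" "{..<N}" "G (Suc k)" i] le s unfolding psum_def by simp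
    next
      case False then show ?thesis using out by simp
    qed
  qed
qed

lemma strip_chain_tail:
  assumes G: "G \<in> strip_chains N lam \<alpha>" and sh: "is_shape N lam" and z: "\<forall>k\<ge>L. \<alpha> k = 0" and L: "L \<le> k"
  shows "G k = lam"
proof -
  have "G (L + d) = G L" for d
  proof (induction d)
    case 0 then show ?case by simp
  next
    case (Suc d) then show ?case using strip_chain_const[OF G sh, of "L + d"] z by simp
  qed
  then have "G k = G L" "G (max N L) = G L" using L by (metis le_add_diff_inverse max.cobounded2)+
  moreover have "G (max N L) = lam" using strip_chain_final[OF G] by simp
  ultimately show ?thesis by simp
qed

definition inner_strips :: "nat \<Rightarrow> (nat \<Rightarrow> nat) \<Rightarrow> nat \<Rightarrow> (nat \<Rightarrow> nat) set" where
  "inner_strips N lam a = {\<rho>. horiz_strip \<rho> lam \<and> psum N \<rho> + a = psum N lam}"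

lemma horiz_strip_is_shape: "horiz_strip \<rho> lam \<Longrightarrow> is_shape N lam \<Longrightarrow> is_shape N \<rho>"
  unfolding horiz_strip_def is_shape_def by (metis le_trans le_zero_eq)

lemma horiz_strip_refl: "is_shape N lam \<Longrightarrow> horiz_strip lam lam"
  unfolding horiz_strip_def is_shape_def by auto

definition split_chain :: "nat \<Rightarrow> (nat \<Rightarrow> nat \<Rightarrow> nat) \<Rightarrow> (nat \<Rightarrow> nat) \<times> (nat \<Rightarrow> nat \<Rightarrow> nat)" where
  "split_chain L G = (G L, \<lambda>k. if k \<le> L then G k else G L)"

definition join_chain :: "nat \<Rightarrow> (nat \<Rightarrow> nat) \<Rightarrow> (nat \<Rightarrow> nat) \<times> (nat \<Rightarrow> nat \<Rightarrow> nat) \<Rightarrow> nat \<Rightarrow> nat \<Rightarrow> nat" where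
  "join_chain L lam p = (\<lambda>k. if k \<le> L then snd p k else lam)"

lemma split_chain_in_Sigma:
  assumes sh: "is_shape N lam" and L: "length xs < N"
    and G: "G \<in> strip_chains N lam (vec_of_list (xs @ [a]))"
  shows "split_chain (length xs) G \<in> Sigma (inner_strips N lam a) (\<lambda>\<rho>. strip_chains N \<rho> (vec_of_list xs))
      \<and> join_chain (length xs) lam (split_chain (length xs) G) = G"
proof -
  let ?L = "length xs"
  have zA: "\<forall>k\<ge>Suc ?L. vec_of_list (xs @ [a]) k = 0" by (simp add: vec_of_list_snoc)
  have zB: "\<forall>k\<ge>?L. vec_of_list xs k = 0" by (simp add: vec_of_list_beyond)
  have tail: "k > ?L \<Longrightarrow> G k = lam" for k using strip_chain_tail[OF G sh zA, of k] by simp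
  have hsL: "horiz_strip (G ?L) lam" using strip_chain_step[OF G L] tail[of "Suc ?L"] by simp
  have szL: "psum N (G ?L) + a = psum N lam"
    using strip_chain_psum_Suc[OF G, of ?L] tail[of "Suc ?L"] by (simp add: vec_of_list_snoc)
  have shL: "is_shape N (G ?L)" by (rule horiz_strip_is_shape[OF hsL sh])
  let ?H = "\<lambda>k. if k \<le> ?L then G k else G ?L"
  have H: "?H \<in> strip_chains N (G ?L) (vec_of_list xs)"
    unfolding strip_chains_def
  proof (intro CollectI conjI allI impI)
    show "?H 0 = (\<lambda>i. 0)" using strip_chain_0[OF G] by simp
  next
    fix k assume "N \<le> k" then show "?H k = G ?L" using L by simp
  next
    fix k assume k: "k < N"
    show "horiz_strip (?H k) (?H (Suc k))"
    proof (cases "k < ?L")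
      case True then show ?thesis using strip_chain_step[OF G k] by simp
    next
      case False then show ?thesis using horiz_strip_refl[OF shL] by simp
    qed
  next
    fix k
    show "vec_of_list xs k = psum N (?H (Suc k)) - psum N (?H k)"
    proof (cases "k < ?L")
      case True then show ?thesis using strip_chain_content[OF G, of k] by (simp add: vec_of_list_snoc)
    next
      case False then show ?thesis by (simp add: vec_of_list_beyond)
    qed
  qed
  have "split_chain ?L G \<in> Sigma (inner_strips N lam a) (\<lambda>\<rho>. strip_chains N \<rho> (vec_of_list xs))"
    unfolding split_chain_def inner_strips_def using hsL szL H by simp
  moreover have "join_chain ?L lam (split_chain ?L G) = G"
    unfolding join_chain_def split_chain_def using tail by (auto simp: fun_eq_iff not_le)
  ultimately show ?thesis by blast
qed

lemma join_chain_in_strip_chains: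
  assumes sh: "is_shape N lam" and L: "length xs < N"
    and p: "p \<in> Sigma (inner_strips N lam a) (\<lambda>\<rho>. strip_chains N \<rho> (vec_of_list xs))"
  shows "join_chain (length xs) lam p \<in> strip_chains N lam (vec_of_list (xs @ [a]))
      \<and> split_chain (length xs) (join_chain (length xs) lam p) = p"
proof -
  let ?L = "length xs"
  have zA: "\<forall>k\<ge>Suc ?L. vec_of_list (xs @ [a]) k = 0" by (simp add: vec_of_list_snoc)
  have zB: "\<forall>k\<ge>?L. vec_of_list xs k = 0" by (simp add: vec_of_list_beyond)
  obtain \<rho> H where pe: "p = (\<rho>, H)" by (cases p)
  have \<rho>: "horiz_strip \<rho> lam" "psum N \<rho> + a = psum N lam" and H: "H \<in> strip_chains N \<rho> (vec_of_list xs)"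
    using p pe unfolding inner_strips_def by auto
  have sh\<rho>: "is_shape N \<rho>" by (rule horiz_strip_is_shape[OF \<rho>(1) sh])
  have Ht: "k \<ge> ?L \<Longrightarrow> H k = \<rho>" for k using strip_chain_tail[OF H sh\<rho> zB] by simp
  let ?G = "join_chain ?L lam p"
  have G: "?G \<in> strip_chains N lam (vec_of_list (xs @ [a]))"
    unfolding strip_chains_def join_chain_def pe snd_conv
  proof (intro CollectI conjI allI impI)
    show "(\<lambda>k. if k \<le> ?L then H k else lam) 0 = (\<lambda>i. 0)" using strip_chain_0[OF H] by simp
  next
    fix k assume "N \<le> k" then show "(\<lambda>k. if k \<le> ?L then H k else lam) k = lam" using L by simp
  next
    fix k assume k: "k < N"
    show "horiz_strip ((\<lambda>k. if k \<le> ?L then H k else lam) k) ((\<lambda>k. if k \<le> ?L then H k else lam) (Suc k))"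
    proof (cases "k < ?L")
      case True then show ?thesis using strip_chain_step[OF H k] by simp
    next
      case False
      show ?thesis
      proof (cases "k = ?L")
        case True then show ?thesis using Ht[of k] \<rho>(1) by simp
      next
        case False then show ?thesis using \<open>\<not> k < ?L\<close> horiz_strip_refl[OF sh] by simp
      qed
    qed
  next
    fix k
    show "vec_of_list (xs @ [a]) k = psum N ((\<lambda>k. if k \<le> ?L then H k else lam) (Suc k)) - psum N ((\<lambda>k. if k \<le> ?L then H k else lam) k)"
    proof (cases "k < ?L")
      case True then show ?thesis using strip_chain_content[OF H, of k] by (simp add: vec_of_list_snoc)
    next
      case False
      show ?thesis
      proof (cases "k = ?L")
        case True then show ?thesis using Ht[of k] \<rho>(2) by (simp add: vec_of_list_snoc)
      next
        case False then show ?thesis using \<open>\<not> k < ?L\<close> by (simp add: vec_of_list_snoc)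
      qed
    qed
  qed
  have "split_chain ?L ?G = p"
    unfolding split_chain_def join_chain_def pe using Ht by (auto simp: fun_eq_iff not_le)
  with G show ?thesis by blast
qed

lemma bij_betw_strip_chains_snoc:
  assumes "is_shape N lam" "length xs < N"
  shows "bij_betw (split_chain (length xs)) (strip_chains N lam (vec_of_list (xs @ [a])))
           (Sigma (inner_strips N lam a) (\<lambda>\<rho>. strip_chains N \<rho> (vec_of_list xs)))"
  by (rule bij_betw_byWitness[where f' = "join_chain (length xs) lam"])
    (use split_chain_in_Sigma[OF assms] join_chain_in_strip_chains[OF assms] in blast)+

definition bounded_vecs :: "nat \<Rightarrow> nat \<Rightarrow> (nat \<Rightarrow> nat) set" where
  "bounded_vecs N B = {f. (\<forall>j\<in>{..<N}. f j \<in> {..B}) \<and> (\<forall>j. j \<notin> {..<N} \<longrightarrow> f j = 0)}"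

lemma finite_bounded_vecs: "finite (bounded_vecs N B)"
  unfolding bounded_vecs_def by (rule finite_funs_support) auto

lemma le_psum: "i < N \<Longrightarrow> lam i \<le> psum N lam"
  unfolding psum_def by (rule member_le_sum) auto

lemma finite_horiz_strips_below:
  assumes sh: "is_shape N lam"
  shows "finite {\<rho>. horiz_strip \<rho> lam}"
proof (rule finite_subset[OF _ finite_bounded_vecs[of N "psum N lam"]])
  show "{\<rho>. horiz_strip \<rho> lam} \<subseteq> bounded_vecs N (psum N lam)"
  proof
    fix \<rho> assume "\<rho> \<in> {\<rho>. horiz_strip \<rho> lam}"
    then have h: "\<forall>i. \<rho> i \<le> lam i" unfolding horiz_strip_def by auto
    show "\<rho> \<in> bounded_vecs N (psum N lam)"
      unfolding bounded_vecs_def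
    proof (intro CollectI conjI ballI allI impI)
      fix j assume "j \<in> {..<N}"
      then show "\<rho> j \<in> {..psum N lam}" using h[rule_format, of j] le_psum[of j N lam] by simp
    next
      fix j assume "j \<notin> {..<N}"
      then show "\<rho> j = 0" using h[rule_format, of j] sh unfolding is_shape_def by simp
    qed
  qed
qed

lemma finite_inner_strips: "is_shape N lam \<Longrightarrow> finite (inner_strips N lam a)"
  unfolding inner_strips_def by (rule finite_subset[OF _ finite_horiz_strips_below]) auto

lemma finite_strip_chains:
  assumes sh: "is_shape N lam"
  shows "finite (strip_chains N lam \<alpha>)"
proof -
  have "strip_chains N lam \<alpha> \<subseteq> {G. (\<forall>k\<in>{..<N}. G k \<in> bounded_vecs N (psum N lam)) \<and> (\<forall>k. k \<notin> {..<N} \<longrightarrow> G k = lam)}"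
  proof
    fix G assume G: "G \<in> strip_chains N lam \<alpha>"
    have "G k \<in> bounded_vecs N (psum N lam)" for k
      unfolding bounded_vecs_def using strip_chain_le[OF G, of k] le_psum[of _ N lam] sh unfolding is_shape_def
      by (auto intro: le_trans) (metis le_zero_eq not_le)
    then show "G \<in> {G. (\<forall>k\<in>{..<N}. G k \<in> bounded_vecs N (psum N lam)) \<and> (\<forall>k. k \<notin> {..<N} \<longrightarrow> G k = lam)}"
      using strip_chain_final[OF G] by auto
  qed
  moreover have "finite {G. (\<forall>k\<in>{..<N}. G k \<in> bounded_vecs N (psum N lam)) \<and> (\<forall>k. k \<notin> {..<N} \<longrightarrow> G k = lam)}"
    by (rule finite_funs_support) (auto simp: finite_bounded_vecs)
  ultimately show ?thesis by (rule finite_subset)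
qed

lemma kostka_snoc:
  assumes sh: "is_shape N lam" and L: "length xs < N"
  shows "kostka N lam (vec_of_list (xs @ [a])) = (\<Sum>\<rho>\<in>inner_strips N lam a. kostka N \<rho> (vec_of_list xs))"
proof -
  have "kostka N lam (vec_of_list (xs @ [a])) = card (Sigma (inner_strips N lam a) (\<lambda>\<rho>. strip_chains N \<rho> (vec_of_list xs)))"
    using kostka_eq_card_strip_chains[OF sh] bij_betw_same_card[OF bij_betw_strip_chains_snoc[OF sh L]] by simp
  also have "\<dots> = (\<Sum>\<rho>\<in>inner_strips N lam a. card (strip_chains N \<rho> (vec_of_list xs)))"
  proof (rule card_SigmaI)
    show "finite (inner_strips N lam a)" by (rule finite_inner_strips[OF sh])
    show "\<forall>\<rho>\<in>inner_strips N lam a. finite (strip_chains N \<rho> (vec_of_list xs))"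
      using finite_strip_chains horiz_strip_is_shape[OF _ sh] unfolding inner_strips_def by blast
  qed
  also have "\<dots> = (\<Sum>\<rho>\<in>inner_strips N lam a. kostka N \<rho> (vec_of_list xs))"
    using kostka_eq_card_strip_chains horiz_strip_is_shape[OF _ sh] unfolding inner_strips_def by (intro sum.cong) auto
  finally show ?thesis .
qed

definition is_column :: "(nat \<Rightarrow> nat) \<Rightarrow> bool" where
  "is_column \<rho> \<longleftrightarrow> (\<forall>i. \<rho> i \<le> 1)"

definition column_vec :: "nat \<Rightarrow> nat \<Rightarrow> nat" where
  "column_vec r = (\<lambda>i. if i < r then 1 else 0)"

lemma psum_column_vec: "r \<le> N \<Longrightarrow> psum N (column_vec r) = r"
proof -
  assume r: "r \<le> N"
  have "psum N (column_vec r) = card ({..<N} \<inter> {i. i < r})"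
    unfolding psum_def column_vec_def by (simp add: sum.If_cases)
  also have "{..<N} \<inter> {i. i < r} = {..<r}" using r by auto
  finally show ?thesis by simp
qed

lemma column_vec_inj: "column_vec r = column_vec s \<Longrightarrow> r = s"
  unfolding column_vec_def by (metis less_irrefl linorder_neqE_nat zero_neq_one)

lemma is_shape_length:
  assumes "is_shape N lam"
  obtains t where "t \<le> N" "\<forall>i. 0 < lam i \<longleftrightarrow> i < t"
proof -
  have ex: "\<exists>i. lam i = 0" using assms unfolding is_shape_def by auto
  define t where "t = (LEAST i. lam i = 0)"
  have "lam i = 0" if "t \<le> i" for i
    using antimonoD[of lam t i] LeastI_ex[OF ex] assms that
    unfolding t_def is_shape_def antimono_iff_le_Suc by simp
  moreover have "0 < lam i" if "i < t" for i using not_less_Least[of i] that unfolding t_def by blast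
  ultimately have "\<forall>i. 0 < lam i \<longleftrightarrow> i < t" by (metis less_irrefl not_le)
  moreover have "t \<le> N" unfolding t_def using assms unfolding is_shape_def by (auto intro: Least_le)
  ultimately show ?thesis using that by blast
qed

lemma is_column_eq_column_vec:
  assumes "is_shape N \<rho>" "is_column \<rho>"
  shows "\<rho> = column_vec (psum N \<rho>)"
proof -
  obtain t where t: "t \<le> N" "\<forall>i. 0 < \<rho> i \<longleftrightarrow> i < t" using is_shape_length[OF assms(1)] by blast
  have "\<rho> i = column_vec t i" for i
    using t(2)[rule_format, of i] assms(2)[unfolded is_column_def, rule_format, of i]
    by (cases "i < t") (auto simp: column_vec_def)
  then have "\<rho> = column_vec t" by (rule ext)
  then show ?thesis using psum_column_vec[OF t(1)] by simp
qed

lemma horiz_strip_column_vec_iff: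
  assumes dec: "\<forall>i. lam (Suc i) \<le> lam i" and t: "\<forall>i. 0 < lam i \<longleftrightarrow> i < t"
  shows "horiz_strip (column_vec r) lam \<longleftrightarrow> lam 1 \<le> 1 \<and> (r = t \<or> Suc r = t)"
proof
  assume h: "horiz_strip (column_vec r) lam"
  then have "lam (Suc 0) \<le> column_vec r 0" unfolding horiz_strip_def by blast
  then have "lam 1 \<le> 1" by (simp add: column_vec_def split: if_splits)
  moreover have "\<not> t < r"
  proof
    assume "t < r"
    moreover have "column_vec r t \<le> lam t" using h unfolding horiz_strip_def by blast
    ultimately show False using t[rule_format, of t] by (simp add: column_vec_def)
  qed
  moreover have "\<not> Suc r < t"
  proof
    assume "Suc r < t"
    moreover have "lam (Suc r) \<le> column_vec r r" using h unfolding horiz_strip_def by blast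
    ultimately show False using t[rule_format, of "Suc r"] by (simp add: column_vec_def)
  qed
  ultimately show "lam 1 \<le> 1 \<and> (r = t \<or> Suc r = t)" by linarith
next
  assume h: "lam 1 \<le> 1 \<and> (r = t \<or> Suc r = t)"
  have "antimono lam" using dec unfolding antimono_iff_le_Suc .
  then have le1: "lam (Suc i) \<le> 1" for i using h antimonoD[of lam 1 "Suc i"] by simp
  show "horiz_strip (column_vec r) lam"
    unfolding horiz_strip_def
  proof
    fix i
    show "lam (Suc i) \<le> column_vec r i \<and> column_vec r i \<le> lam i"
    proof (cases "i < r")
      case True
      then have "i < t" using h by linarith
      then have "0 < lam i" using t by blast
      then show ?thesis using True le1[of i] by (simp add: column_vec_def)
    next
      case False
      then have "\<not> Suc i < t" using h by linarith
      then have "lam (Suc i) = 0" using t[rule_format, of "Suc i"] by simp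
      then show ?thesis using False by (simp add: column_vec_def)
    qed
  qed
qed

lemma psum_hook_shape:
  assumes dec: "\<forall>i. lam (Suc i) \<le> lam i" and t: "\<forall>i. 0 < lam i \<longleftrightarrow> i < t"
    and "lam 1 \<le> 1" "0 < t" "t \<le> N"
  shows "psum N lam = lam 0 + (t - 1)"
proof -
  have "antimono lam" using dec unfolding antimono_iff_le_Suc .
  then have one: "lam i = 1" if "0 < i" "i < t" for i
    using t[rule_format, of i] that assms(3) antimonoD[of lam 1 i] by simp
  have zero: "lam i = 0" if "t \<le> i" for i using t[rule_format, of i] that by simp
  have "psum N lam = (\<Sum>i\<in>{0..<t}. lam i)"
    unfolding psum_def atLeast0LessThan by (rule sum.mono_neutral_right) (use zero assms(5) in auto)
  also have "\<dots> = lam 0 + (\<Sum>i\<in>{Suc 0..<t}. lam i)" using assms(4) by (rule sum.atLeast_Suc_lessThan)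
  also have "(\<Sum>i\<in>{Suc 0..<t}. lam i) = (\<Sum>i\<in>{Suc 0..<t}. 1)" using one by (intro sum.cong) auto
  finally show ?thesis by simp
qed

lemma alt_sum_column_strips:
  assumes sh: "is_shape N lam" and m: "psum N lam = m" "0 < m"
  shows "- (\<Sum>\<rho>\<in>{\<rho>. horiz_strip \<rho> lam \<and> psum N \<rho> < m}. if is_column \<rho> then (-1::int) ^ psum N \<rho> else 0)
         = (if is_column lam then (-1) ^ m else 0)"
proof -
  obtain t where t: "t \<le> N" "\<forall>i. 0 < lam i \<longleftrightarrow> i < t" using is_shape_length[OF sh] by blast
  have dec: "\<forall>i. lam (Suc i) \<le> lam i" using sh unfolding is_shape_def by simp
  note strip_iff = horiz_strip_column_vec_iff[OF dec t(2)]
  let ?H = "{\<rho>. horiz_strip \<rho> lam \<and> psum N \<rho> < m}"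
  let ?R = "{r. r < m \<and> horiz_strip (column_vec r) lam}"
  have R_le: "r \<le> N" if "r \<in> ?R" for r
  proof -
    have "r = t \<or> Suc r = t" using that strip_iff by blast
    then show ?thesis using t(1) by linarith
  qed
  have cols: "?H \<inter> {\<rho>. is_column \<rho>} = column_vec ` ?R"
  proof (intro set_eqI iffI)
    fix \<rho> assume "\<rho> \<in> ?H \<inter> {\<rho>. is_column \<rho>}"
    then have "\<rho> = column_vec (psum N \<rho>)" "psum N \<rho> \<in> ?R"
      using is_column_eq_column_vec[OF horiz_strip_is_shape[OF _ sh], of \<rho>] by auto
    then show "\<rho> \<in> column_vec ` ?R" by (rule image_eqI)
  next
    fix \<rho> assume "\<rho> \<in> column_vec ` ?R"
    then obtain r where "r \<in> ?R" "\<rho> = column_vec r" by blast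
    then show "\<rho> \<in> ?H \<inter> {\<rho>. is_column \<rho>}"
      using R_le psum_column_vec unfolding is_column_def column_vec_def by auto
  qed
  have fH: "finite ?H" by (rule finite_subset[OF _ finite_horiz_strips_below[OF sh]]) auto
  have "(\<Sum>\<rho>\<in>?H. if is_column \<rho> then (-1::int) ^ psum N \<rho> else 0) = (\<Sum>\<rho>\<in>column_vec ` ?R. (-1) ^ psum N \<rho>)"
    using fH unfolding cols[symmetric] by (simp add: sum.If_cases)
  also have "\<dots> = (\<Sum>r\<in>?R. (-1) ^ r)"
    using column_vec_inj R_le psum_column_vec by (subst sum.reindex) (auto simp: inj_on_def)
  also have "\<dots> = (if is_column lam then - ((-1) ^ m) else 0)"
  proof (cases "lam 1 \<le> 1")
    case True
    have "0 < t"
    proof (rule ccontr)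
      assume "\<not> 0 < t"
      then have "lam i = 0" for i using t(2)[rule_format, of i] by simp
      then show False using m by (simp add: psum_def)
    qed
    then obtain t' where t': "t = Suc t'" using not0_implies_Suc by blast
    have m_eq: "m = lam 0 + t'" using psum_hook_shape[OF dec t(2) True \<open>0 < t\<close> t(1)] m(1) t' by simp
    have "0 < lam 0" using t(2)[rule_format, of 0] \<open>0 < t\<close> by simp
    have R: "?R = {r. r < m \<and> (r = t \<or> Suc r = t)}" using strip_iff True by simp
    show ?thesis
    proof (cases "lam 0 \<le> 1")
      case True
      then have "m = t" using m_eq \<open>0 < lam 0\<close> t' by simp
      then have "?R = {t'}" unfolding R using t' by auto
      moreover have "antimono lam" using dec unfolding antimono_iff_le_Suc .
      then have "lam i \<le> 1" for i using True antimonoD[of lam 0 i] by simp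
      then have "is_column lam" unfolding is_column_def by blast
      ultimately show ?thesis using \<open>m = t\<close> t' by simp
    next
      case False
      then have "t < m" using m_eq t' by simp
      then have "?R = {t', t}" unfolding R using t' by auto
      moreover have "\<not> is_column lam" using False unfolding is_column_def by (meson not_le)
      ultimately show ?thesis using t' by simp
    qed
  next
    case False
    then have "r \<notin> ?R" for r using strip_iff[of r] by simp
    then have "?R = {}" by blast
    moreover have "\<not> is_column lam" using False unfolding is_column_def by (meson not_le)
    ultimately show ?thesis by (simp only: sum.empty if_False)
  qed
  finally show ?thesis by simp
qed

lemma sum_inner_strips_regroup:
  assumes sh: "is_shape N lam" and m: "psum N lam = m"
  shows "(\<Sum>a\<in>{1..m}. \<Sum>\<rho>\<in>inner_strips N lam a. h \<rho>) = (\<Sum>\<rho>\<in>{\<rho>. horiz_strip \<rho> lam \<and> psum N \<rho> < m}. h \<rho>)"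
proof -
  let ?H = "{\<rho>. horiz_strip \<rho> lam \<and> psum N \<rho> < m}"
  have "inner_strips N lam a = {\<rho>\<in>?H. m - psum N \<rho> = a}" if "a \<in> {1..m}" for a
    using that m unfolding inner_strips_def by auto
  then have "(\<Sum>a\<in>{1..m}. \<Sum>\<rho>\<in>inner_strips N lam a. h \<rho>) = (\<Sum>a\<in>{1..m}. \<Sum>\<rho>\<in>{\<rho>\<in>?H. m - psum N \<rho> = a}. h \<rho>)"
    by (intro sum.cong) auto
  also have "\<dots> = (\<Sum>\<rho>\<in>?H. h \<rho>)"
    by (rule sum.group) (auto intro: finite_subset[OF _ finite_horiz_strips_below[OF sh]])
  finally show ?thesis .
qed

lemma alt_sum_kostka_snoc:
  assumes sh: "is_shape N lam" and m: "psum N lam = m" "0 < m" "m \<le> N"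
  shows "(\<Sum>xs\<in>compositions m. (-1::int) ^ length xs * int (kostka N lam (vec_of_list xs)))
    = - (\<Sum>\<rho>\<in>{\<rho>. horiz_strip \<rho> lam \<and> psum N \<rho> < m}.
           \<Sum>xs\<in>compositions (psum N \<rho>). (-1) ^ length xs * int (kostka N \<rho> (vec_of_list xs)))"
proof -
  have "(\<Sum>xs\<in>compositions m. (-1::int) ^ length xs * int (kostka N lam (vec_of_list xs)))
      = - (\<Sum>a\<in>{1..m}. \<Sum>xs\<in>compositions (m - a). (-1::int) ^ length xs * int (kostka N lam (vec_of_list (xs @ [a]))))"
    by (rule alt_sum_compositions_snoc[OF m(2)])
  also have "\<dots> = - (\<Sum>a\<in>{1..m}. \<Sum>\<rho>\<in>inner_strips N lam a.
      \<Sum>xs\<in>compositions (m - a). (-1::int) ^ length xs * int (kostka N \<rho> (vec_of_list xs)))"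
  proof -
    have "(-1::int) ^ length xs * int (kostka N lam (vec_of_list (xs @ [a])))
        = (\<Sum>\<rho>\<in>inner_strips N lam a. (-1::int) ^ length xs * int (kostka N \<rho> (vec_of_list xs)))"
      if "a \<in> {1..m}" "xs \<in> compositions (m - a)" for a xs
    proof -
      have "length xs < N" using compositions_length_le[OF that(2)] that(1) m(3) by simp linarith
      then show ?thesis using kostka_snoc[OF sh, of xs a] by (simp add: sum_distrib_left)
    qed
    then show ?thesis by (simp add: sum.swap[of _ "compositions _"])
  qed
  also have "\<dots> = - (\<Sum>\<rho>\<in>{\<rho>. horiz_strip \<rho> lam \<and> psum N \<rho> < m}.
      \<Sum>xs\<in>compositions (psum N \<rho>). (-1) ^ length xs * int (kostka N \<rho> (vec_of_list xs)))"
  proof -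
    have "(\<Sum>a\<in>{1..m}. \<Sum>\<rho>\<in>inner_strips N lam a. \<Sum>xs\<in>compositions (m - a). (-1::int) ^ length xs * int (kostka N \<rho> (vec_of_list xs)))
      = (\<Sum>a\<in>{1..m}. \<Sum>\<rho>\<in>inner_strips N lam a. \<Sum>xs\<in>compositions (psum N \<rho>). (-1::int) ^ length xs * int (kostka N \<rho> (vec_of_list xs)))"
    proof (intro sum.cong refl)
      fix a \<rho> assume "a \<in> {1..m}" "\<rho> \<in> inner_strips N lam a"
      then have "m - a = psum N \<rho>" using m(1) unfolding inner_strips_def by auto
      then show "compositions (m - a) = compositions (psum N \<rho>)" by simp
    qed
    then show ?thesis
      using sum_inner_strips_regroup[OF sh m(1), of "\<lambda>\<rho>. \<Sum>xs\<in>compositions (psum N \<rho>). (-1::int) ^ length xs * int (kostka N \<rho> (vec_of_list xs))"]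
      by simp
  qed
  finally show ?thesis .
qed

lemma alt_sum_kostka_compositions:
  assumes "is_shape N lam" "psum N lam \<le> N"
  shows "(\<Sum>xs\<in>compositions (psum N lam). (-1::int) ^ length xs * int (kostka N lam (vec_of_list xs)))
         = (if is_column lam then (-1) ^ psum N lam else 0)"
  using assms
proof (induction "psum N lam" arbitrary: lam rule: less_induct)
  case less
  note sh = less.prems(1)
  define m where "m = psum N lam"
  show ?case
  proof (cases "m = 0")
    case True
    have "lam i = 0" for i
      using \<open>m = 0\<close> sh unfolding m_def psum_def is_shape_def by (cases "i < N") auto
    then have "lam = vec_of_list []" "is_column lam" unfolding vec_of_list_def is_column_def by auto
    then show ?thesis using True compositions_0 kostka_diag[OF sh] unfolding m_def by simp
  next
    case False
    let ?g = "\<lambda>\<rho>. if is_column \<rho> then (-1::int) ^ psum N \<rho> else 0"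
    have IH: "(\<Sum>xs\<in>compositions (psum N \<rho>). (-1::int) ^ length xs * int (kostka N \<rho> (vec_of_list xs)))
        = ?g \<rho>" if "horiz_strip \<rho> lam \<and> psum N \<rho> < m" for \<rho>
      using that less.hyps[OF _ horiz_strip_is_shape[OF _ sh]] less.prems(2) unfolding m_def by simp
    have "(\<Sum>xs\<in>compositions m. (-1::int) ^ length xs * int (kostka N lam (vec_of_list xs)))
        = - (\<Sum>\<rho>\<in>{\<rho>. horiz_strip \<rho> lam \<and> psum N \<rho> < m}. ?g \<rho>)"
      using alt_sum_kostka_snoc[OF sh m_def[symmetric]] False less.prems(2) IH unfolding m_def by simp
    also have "\<dots> = (if is_column lam then (-1) ^ m else 0)"
      using alt_sum_column_strips[OF sh m_def[symmetric]] False by simp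
    finally show ?thesis unfolding m_def .
  qed
qed

text \<open>
  Peeling off the last letter of a composition for power sums: the parts sent to the last
  variable form a set \<open>B\<close> of total weight \<open>a\<close>.
\<close>

definition split_assign :: "nat \<Rightarrow> nat set \<Rightarrow> (nat \<Rightarrow> nat) \<Rightarrow> nat set \<times> (nat \<Rightarrow> nat)" where
  "split_assign L J f = ({j\<in>J. f j = L}, \<lambda>j. if j \<in> J \<and> f j \<noteq> L then f j else 0)"

definition join_assign :: "nat \<Rightarrow> nat set \<times> (nat \<Rightarrow> nat) \<Rightarrow> nat \<Rightarrow> nat" where
  "join_assign L p = (\<lambda>j. if j \<in> fst p then L else snd p j)"

lemma assignments_content: "f \<in> assignments N J wt \<alpha> \<Longrightarrow> (\<Sum>j\<in>{j\<in>J. f j = i}. wt j) = \<alpha> i"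
  unfolding assignments_def by blast

lemma split_assign_in_Sigma:
  assumes fJ: "finite J" and pos: "\<forall>j\<in>J. 0 < wt j"
    and f: "f \<in> assignments N J wt (vec_of_list (xs @ [a]))"
  shows "split_assign (length xs) J f \<in> Sigma {B. B \<subseteq> J \<and> sum wt B = a} (\<lambda>B. assignments N (J - B) wt (vec_of_list xs))
      \<and> join_assign (length xs) (split_assign (length xs) J f) = f"
proof -
  let ?L = "length xs"
  have fle: "f j \<le> ?L" if "j \<in> J" for j
  proof (rule ccontr)
    assume "\<not> f j \<le> ?L"
    then have "(\<Sum>j'\<in>{j'\<in>J. f j' = f j}. wt j') = 0" using assignments_content[OF f, of "f j"] by (simp add: vec_of_list_snoc)
    with sum_fiber_pos[OF fJ that, of f "f j" wt] pos show False by simp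
  qed
  let ?B = "{j\<in>J. f j = ?L}"
  let ?g = "\<lambda>j. if j \<in> J \<and> f j \<noteq> ?L then f j else 0"
  have B: "?B \<subseteq> J" "sum wt ?B = a" using assignments_content[OF f, of ?L] by (auto simp: vec_of_list_snoc)
  have g: "?g \<in> assignments N (J - ?B) wt (vec_of_list xs)"
    unfolding assignments_def
  proof (intro CollectI conjI allI ballI impI)
    fix j assume "j \<in> J - ?B" then show "?g j < N" using f unfolding assignments_def by auto
  next
    fix j assume "j \<notin> J - ?B" then show "?g j = 0" by auto
  next
    fix i
    show "(\<Sum>j\<in>{j\<in>J - ?B. ?g j = i}. wt j) = vec_of_list xs i"
    proof (cases "i = ?L")
      case True
      have e: "{j\<in>J - ?B. ?g j = i} = {}" using True by auto
      show ?thesis using True by (subst e) (simp add: vec_of_list_beyond)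
    next
      case False
      have e: "{j\<in>J - ?B. ?g j = i} = {j\<in>J. f j = i}" using False by auto
      show ?thesis using False assignments_content[OF f, of i] by (subst e) (simp add: vec_of_list_snoc vec_of_list_beyond)
    qed
  qed
  have "split_assign ?L J f \<in> Sigma {B. B \<subseteq> J \<and> sum wt B = a} (\<lambda>B. assignments N (J - B) wt (vec_of_list xs))"
    unfolding split_assign_def using B g by simp
  moreover have "join_assign ?L (split_assign ?L J f) = f"
    unfolding join_assign_def split_assign_def using f unfolding assignments_def by (auto simp: fun_eq_iff)
  ultimately show ?thesis by blast
qed

lemma join_assign_in_assignments:
  assumes fJ: "finite J" and pos: "\<forall>j\<in>J. 0 < wt j" and L: "length xs < N"
    and p: "p \<in> Sigma {B. B \<subseteq> J \<and> sum wt B = a} (\<lambda>B. assignments N (J - B) wt (vec_of_list xs))"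
  shows "join_assign (length xs) p \<in> assignments N J wt (vec_of_list (xs @ [a]))
      \<and> split_assign (length xs) J (join_assign (length xs) p) = p"
proof -
  let ?L = "length xs"
  obtain B g where pe: "p = (B, g)" by (cases p)
  have B: "B \<subseteq> J" "sum wt B = a" and g: "g \<in> assignments N (J - B) wt (vec_of_list xs)" using p pe by auto
  have gL: "g j \<noteq> ?L" if "j \<in> J - B" for j
  proof
    assume gj: "g j = ?L"
    have "(\<Sum>j'\<in>{j'\<in>J - B. g j' = ?L}. wt j') = 0" using assignments_content[OF g, of ?L] by (simp add: vec_of_list_beyond)
    with sum_fiber_pos[of "J - B" j g ?L wt] fJ that gj pos show False by auto
  qed
  let ?f = "join_assign ?L p"
  have fe: "?f = (\<lambda>j. if j \<in> B then ?L else g j)" unfolding join_assign_def pe fst_conv snd_conv ..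
  have f: "?f \<in> assignments N J wt (vec_of_list (xs @ [a]))"
    unfolding assignments_def fe
  proof (intro CollectI conjI allI ballI impI)
    fix j assume "j \<in> J" then show "(if j \<in> B then ?L else g j) < N" using g L unfolding assignments_def by auto
  next
    fix j assume "j \<notin> J" then show "(if j \<in> B then ?L else g j) = 0" using g B(1) unfolding assignments_def by auto
  next
    fix i
    show "(\<Sum>j\<in>{j\<in>J. (if j \<in> B then ?L else g j) = i}. wt j) = vec_of_list (xs @ [a]) i"
    proof (cases "i = ?L")
      case True
      have e: "{j\<in>J. (if j \<in> B then ?L else g j) = i} = B" using True B(1) gL by auto
      show ?thesis using True B(2) by (subst e) (simp add: vec_of_list_snoc)
    next
      case False
      have e: "{j\<in>J. (if j \<in> B then ?L else g j) = i} = {j\<in>J - B. g j = i}" using False by auto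
      show ?thesis using False assignments_content[OF g, of i] by (subst e) (simp add: vec_of_list_snoc vec_of_list_beyond)
    qed
  qed
  have "split_assign ?L J (\<lambda>j. if j \<in> B then ?L else g j) = (B, g)"
    unfolding split_assign_def using gL g B(1) unfolding assignments_def by (auto simp: fun_eq_iff)
  then have "split_assign ?L J ?f = p" using fe pe by simp
  with f show ?thesis by blast
qed

lemma bij_betw_assignments_snoc:
  assumes "finite J" "\<forall>j\<in>J. 0 < wt j" "length xs < N"
  shows "bij_betw (split_assign (length xs) J) (assignments N J wt (vec_of_list (xs @ [a])))
           (Sigma {B. B \<subseteq> J \<and> sum wt B = a} (\<lambda>B. assignments N (J - B) wt (vec_of_list xs)))"
  by (rule bij_betw_byWitness[where f' = "join_assign (length xs)"])
    (use split_assign_in_Sigma[OF assms(1,2)] join_assign_in_assignments[OF assms] in blast)+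

lemma finite_assignments:
  assumes "finite J"
  shows "finite (assignments N J wt \<alpha>)"
proof (rule finite_subset[OF _ finite_funs_support[OF assms, of "{..<N}" 0]])
  show "assignments N J wt \<alpha> \<subseteq> {f. (\<forall>j\<in>J. f j \<in> {..<N}) \<and> (\<forall>j. j \<notin> J \<longrightarrow> f j = 0)}"
    unfolding assignments_def by auto
qed simp

lemma n_assignments_snoc:
  assumes fJ: "finite J" and pos: "\<forall>j\<in>J. 0 < wt j" and L: "length xs < N"
  shows "n_assignments N J wt (vec_of_list (xs @ [a])) = (\<Sum>B\<in>{B. B \<subseteq> J \<and> sum wt B = a}. n_assignments N (J - B) wt (vec_of_list xs))"
proof -
  have "n_assignments N J wt (vec_of_list (xs @ [a])) = card (Sigma {B. B \<subseteq> J \<and> sum wt B = a} (\<lambda>B. assignments N (J - B) wt (vec_of_list xs)))"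
    unfolding n_assignments_def using bij_betw_same_card[OF bij_betw_assignments_snoc[OF assms]] .
  also have "\<dots> = (\<Sum>B\<in>{B. B \<subseteq> J \<and> sum wt B = a}. card (assignments N (J - B) wt (vec_of_list xs)))"
  proof (rule card_SigmaI)
    show "finite {B. B \<subseteq> J \<and> sum wt B = a}" using fJ by simp
    show "\<forall>B\<in>{B. B \<subseteq> J \<and> sum wt B = a}. finite (assignments N (J - B) wt (vec_of_list xs))"
      using finite_assignments fJ by auto
  qed
  finally show ?thesis unfolding n_assignments_def .
qed



lemma n_assignments_empty: "n_assignments N {} wt (vec_of_list []) = 1"
proof -
  have "assignments N {} wt (vec_of_list []) = {\<lambda>j. 0}"
    unfolding assignments_def vec_of_list_def by (auto simp: fun_eq_iff)
  then show ?thesis unfolding n_assignments_def by simp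
qed

lemma sum_weighted_subsets_regroup:
  fixes wt :: "'a \<Rightarrow> nat"
  assumes fJ: "finite J" and pos: "\<forall>j\<in>J. 0 < wt j" and m: "sum wt J = m"
  shows "(\<Sum>a\<in>{1..m}. \<Sum>B\<in>{B. B \<subseteq> J \<and> sum wt B = a}. h B) = (\<Sum>B\<in>Pow J - {{}}. h B)"
proof -
  have "{B. B \<subseteq> J \<and> sum wt B = a} = {B\<in>Pow J - {{}}. sum wt B = a}" if "a \<in> {1..m}" for a
    using that by auto
  then have "(\<Sum>a\<in>{1..m}. \<Sum>B\<in>{B. B \<subseteq> J \<and> sum wt B = a}. h B)
      = (\<Sum>a\<in>{1..m}. \<Sum>B\<in>{B\<in>Pow J - {{}}. sum wt B = a}. h B)"
    by (intro sum.cong) auto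
  also have "\<dots> = (\<Sum>B\<in>Pow J - {{}}. h B)"
  proof (rule sum.group)
    show "sum wt ` (Pow J - {{}}) \<subseteq> {1..m}"
    proof
      fix s assume "s \<in> sum wt ` (Pow J - {{}})"
      then obtain B where B: "B \<subseteq> J" "B \<noteq> {}" "s = sum wt B" by auto
      have "finite B" using finite_subset[OF B(1) fJ] .
      then have "s \<noteq> 0" using pos B by (auto simp: sum_eq_0_iff)
      moreover have "s \<le> m" using sum_mono2[OF fJ B(1), of wt] B(3) m by simp
      ultimately show "s \<in> {1..m}" by simp
    qed
  qed (use fJ in auto)
  finally show ?thesis .
qed

lemma alt_sum_n_assignments_snoc:
  fixes wt :: "nat \<Rightarrow> nat"
  assumes fJ: "finite J" and pos: "\<forall>j\<in>J. 0 < wt j" and m: "sum wt J = m" "0 < m" "m \<le> N"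
  shows "(\<Sum>xs\<in>compositions m. (-1::int) ^ length xs * int (n_assignments N J wt (vec_of_list xs)))
    = - (\<Sum>B\<in>Pow J - {{}}. \<Sum>xs\<in>compositions (sum wt (J - B)).
           (-1) ^ length xs * int (n_assignments N (J - B) wt (vec_of_list xs)))"
proof -
  let ?Bs = "\<lambda>a. {B. B \<subseteq> J \<and> sum wt B = a}"
  have "(\<Sum>xs\<in>compositions m. (-1::int) ^ length xs * int (n_assignments N J wt (vec_of_list xs)))
      = - (\<Sum>a\<in>{1..m}. \<Sum>xs\<in>compositions (m - a). (-1::int) ^ length xs * int (n_assignments N J wt (vec_of_list (xs @ [a]))))"
    by (rule alt_sum_compositions_snoc[OF m(2)])
  also have "\<dots> = - (\<Sum>a\<in>{1..m}. \<Sum>B\<in>?Bs a.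
      \<Sum>xs\<in>compositions (m - a). (-1::int) ^ length xs * int (n_assignments N (J - B) wt (vec_of_list xs)))"
  proof -
    have "(-1::int) ^ length xs * int (n_assignments N J wt (vec_of_list (xs @ [a])))
        = (\<Sum>B\<in>?Bs a. (-1::int) ^ length xs * int (n_assignments N (J - B) wt (vec_of_list xs)))"
      if "a \<in> {1..m}" "xs \<in> compositions (m - a)" for a xs
    proof -
      have "length xs < N" using compositions_length_le[OF that(2)] that(1) m(3) by simp linarith
      then show ?thesis using n_assignments_snoc[OF fJ pos, of xs N a] by (simp add: sum_distrib_left)
    qed
    then show ?thesis by (simp add: sum.swap[of _ "compositions _"])
  qed
  also have "\<dots> = - (\<Sum>a\<in>{1..m}. \<Sum>B\<in>?Bs a. \<Sum>xs\<in>compositions (sum wt (J - B)).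
      (-1::int) ^ length xs * int (n_assignments N (J - B) wt (vec_of_list xs)))"
  proof -
    have "m - a = sum wt (J - B)" if "B \<in> ?Bs a" for a B
    proof -
      have "B \<subseteq> J" "sum wt B = a" using that by auto
      then show ?thesis using sum_diff_nat[OF finite_subset[OF _ fJ], where f = wt] m(1) by simp
    qed
    then show ?thesis by (intro arg_cong[where f = uminus] sum.cong refl) simp
  qed
  also have "\<dots> = - (\<Sum>B\<in>Pow J - {{}}. \<Sum>xs\<in>compositions (sum wt (J - B)).
      (-1::int) ^ length xs * int (n_assignments N (J - B) wt (vec_of_list xs)))"
    using sum_weighted_subsets_regroup[OF fJ pos m(1)] by simp
  finally show ?thesis .
qed

lemma alt_sum_n_assignments_compositions:
  fixes wt :: "nat \<Rightarrow> nat"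
  assumes "finite J" "\<forall>j\<in>J. 0 < wt j" "sum wt J \<le> N"
  shows "(\<Sum>xs\<in>compositions (sum wt J). (-1::int) ^ length xs * int (n_assignments N J wt (vec_of_list xs)))
    = (-1) ^ card J"
  using assms
proof (induction "sum wt J" arbitrary: J rule: less_induct)
  case less
  note fJ = less.prems(1) and pos = less.prems(2)
  show ?case
  proof (cases "sum wt J = 0")
    case True
    then have "J = {}" using fJ pos by (auto simp: sum_eq_0_iff)
    then show ?thesis using compositions_0 n_assignments_empty by simp
  next
    case False
    have IH: "(\<Sum>xs\<in>compositions (sum wt (J - B)). (-1::int) ^ length xs * int (n_assignments N (J - B) wt (vec_of_list xs)))
        = (-1) ^ card J * (-1) ^ card B" if B: "B \<in> Pow J - {{}}" for B
    proof -
      have fB: "finite B" "B \<subseteq> J" using B finite_subset[OF _ fJ] by auto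
      have "sum wt B \<noteq> 0" using fB B pos by (auto simp: sum_eq_0_iff)
      then have "sum wt (J - B) < sum wt J" using sum_diff_nat[OF fB] sum_mono2[OF fJ fB(2), of wt] by simp
      then have "(\<Sum>xs\<in>compositions (sum wt (J - B)). (-1::int) ^ length xs * int (n_assignments N (J - B) wt (vec_of_list xs)))
          = (-1) ^ card (J - B)"
        using less.hyps[of "J - B"] fJ pos less.prems(3) by auto
      also have "\<dots> = (-1) ^ card J * (-1) ^ card B"
        using card_Diff_subset[OF fB] card_mono[OF fJ fB(2)]
        by (simp add: neg_one_power_add_eq_neg_one_power_diff[symmetric] power_add)
      finally show ?thesis .
    qed
    have "(\<Sum>xs\<in>compositions (sum wt J). (-1::int) ^ length xs * int (n_assignments N J wt (vec_of_list xs)))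
        = - (\<Sum>B\<in>Pow J - {{}}. (-1) ^ card J * (-1) ^ card B)"
      using alt_sum_n_assignments_snoc[OF fJ pos refl] False less.prems(3) IH by simp
    also have "\<dots> = - ((-1) ^ card J * ((\<Sum>B\<in>Pow J. (-1) ^ card B) - 1))"
      using sum.remove[of "Pow J" "{}" "\<lambda>B. (-1::int) ^ card B"] fJ by (simp add: sum_distrib_left)
    also have "(\<Sum>B\<in>Pow J. (-1::int) ^ card B) = 0"
      using sum_Pow_minus_one fJ False by (metis sum.empty)
    finally show ?thesis by simp
  qed
qed
lemma alt_sum_n_assignments_compositions_snoc_1:
  assumes fJ: "finite J" and pos: "\<forall>j\<in>J. 0 < wt j" and m: "sum wt J = m" "1 \<le> m" "m \<le> N"
  shows "(\<Sum>xs\<in>compositions (m - 1). (-1::int) ^ length xs * int (n_assignments N J wt (vec_of_list (xs @ [1]))))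
         = (-1) ^ (card J - 1) * int (card {j\<in>J. wt j = 1})"
proof -
  let ?Bs = "{B. B \<subseteq> J \<and> sum wt B = 1}"
  have Bs: "?Bs = (\<lambda>j. {j}) ` {j\<in>J. wt j = 1}"
  proof (rule set_eqI)
    fix B show "B \<in> ?Bs \<longleftrightarrow> B \<in> (\<lambda>j. {j}) ` {j\<in>J. wt j = 1}"
    proof
      assume B: "B \<in> ?Bs"
      then have "finite B" "\<forall>j\<in>B. 0 < wt j" using finite_subset[OF _ fJ] pos by auto
      then obtain j0 where "B = {j0}" "wt j0 = 1" using pos_sum_eq_1_imp_singleton B by blast
      then show "B \<in> (\<lambda>j. {j}) ` {j\<in>J. wt j = 1}" using B by auto
    qed auto
  qed
  have cBs: "card ?Bs = card {j\<in>J. wt j = 1}" unfolding Bs by (rule card_image) (auto simp: inj_on_def)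
  have fBs: "finite ?Bs" using fJ by simp
  have "(\<Sum>xs\<in>compositions (m - 1). (-1::int) ^ length xs * int (n_assignments N J wt (vec_of_list (xs @ [1]))))
      = (\<Sum>xs\<in>compositions (m - 1). \<Sum>B\<in>?Bs. (-1::int) ^ length xs * int (n_assignments N (J - B) wt (vec_of_list xs)))"
  proof (rule sum.cong[OF refl])
    fix xs assume xs: "xs \<in> compositions (m - 1)"
    have "length xs < N" using compositions_length_le[OF xs] m by simp
    then show "(-1::int) ^ length xs * int (n_assignments N J wt (vec_of_list (xs @ [1]))) = (\<Sum>B\<in>?Bs. (-1::int) ^ length xs * int (n_assignments N (J - B) wt (vec_of_list xs)))"
      using n_assignments_snoc[OF fJ pos, of xs N 1] by (simp add: sum_distrib_left)
  qed
  also have "\<dots> = (\<Sum>B\<in>?Bs. \<Sum>xs\<in>compositions (m - 1). (-1::int) ^ length xs * int (n_assignments N (J - B) wt (vec_of_list xs)))"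
    by (rule sum.swap)
  also have "\<dots> = (\<Sum>B\<in>?Bs. (-1::int) ^ (card J - 1))"
  proof (rule sum.cong[OF refl])
    fix B assume B: "B \<in> ?Bs"
    have "B \<in> (\<lambda>j. {j}) ` {j\<in>J. wt j = 1}" using B unfolding Bs .
    then obtain j where j: "B = {j}" "j \<in> J" "wt j = 1" by auto
    have s: "sum wt (J - B) = m - 1" using sum.remove[OF fJ j(2), of wt] j m by simp
    have "(\<Sum>xs\<in>compositions (sum wt (J - B)). (-1::int) ^ length xs * int (n_assignments N (J - B) wt (vec_of_list xs))) = (-1) ^ card (J - B)"
      using alt_sum_n_assignments_compositions[of "J - B" wt N] fJ pos s m by auto
    moreover have "card (J - B) = card J - 1" using j fJ by simp
    ultimately show "(\<Sum>xs\<in>compositions (m - 1). (-1::int) ^ length xs * int (n_assignments N (J - B) wt (vec_of_list xs))) = (-1) ^ (card J - 1)"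
      using s by simp
  qed
  also have "\<dots> = (-1) ^ (card J - 1) * int (card {j\<in>J. wt j = 1})" using cBs by simp
  finally show ?thesis .
qed

definition conj_hook_functional :: "nat \<Rightarrow> ((nat \<Rightarrow> nat) \<Rightarrow> int) \<Rightarrow> int" where
  "conj_hook_functional n f = (\<Sum>xs\<in>compositions (n - 1). (-1) ^ (n + 1 + length xs) * f (vec_of_list (xs @ [1])))
          - (\<Sum>xs\<in>compositions n. (-1) ^ (n + length xs) * f (vec_of_list xs))"

lemma conj_hook_functional_lincomb:
  assumes "finite I"
  shows "conj_hook_functional n (\<lambda>\<alpha>. \<Sum>i\<in>I. c i * g i \<alpha>) = (\<Sum>i\<in>I. c i * conj_hook_functional n (g i))"
proof -
  have a: "(\<Sum>xs\<in>A. (-1) ^ (k xs) * (\<Sum>i\<in>I. c i * g i (v xs))) = (\<Sum>i\<in>I. c i * (\<Sum>xs\<in>A. (-1) ^ (k xs) * g i (v xs)))"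
    for A :: "nat list set" and k v
    by (simp add: sum_distrib_left sum_distrib_right mult.assoc mult.left_commute sum.swap[of _ A])
  show ?thesis unfolding conj_hook_functional_def a by (simp add: sum_subtractf right_diff_distrib)
qed

definition chi_conj_hook :: "nat \<Rightarrow> nat list \<Rightarrow> int" where
  "chi_conj_hook n \<mu> = (-1) ^ (n + length \<mu>) * chi_hook \<mu>"

lemma conj_hook_functional_pcoeff:
  assumes \<mu>: "\<mu> \<in> partitions n" and n: "2 \<le> n"
  shows "conj_hook_functional n (pcoeff n \<mu>) = chi_conj_hook n \<mu>"
proof -
  note h = partition_parts_props[OF \<mu>]
  have L: "1 \<le> length \<mu>" using h(3) n by (cases \<mu>) auto
  have first: "(\<Sum>xs\<in>compositions (n - 1). (-1::int) ^ length xs * pcoeff n \<mu> (vec_of_list (xs @ [1])))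
      = (-1) ^ (length \<mu> - 1) * int (count_list \<mu> 1)"
    unfolding pcoeff_eq_n_assignments card_indices_eq_count_list[symmetric] using alt_sum_n_assignments_compositions_snoc_1[OF h(1,2,3)] n by simp
  have second: "(\<Sum>xs\<in>compositions n. (-1::int) ^ length xs * pcoeff n \<mu> (vec_of_list xs)) = (-1) ^ length \<mu>"
    unfolding pcoeff_eq_n_assignments using alt_sum_n_assignments_compositions[OF h(1,2), of n] h(3) by simp
  have "conj_hook_functional n (pcoeff n \<mu>) = (-1) ^ (n + 1) * (\<Sum>xs\<in>compositions (n - 1). (-1::int) ^ length xs * pcoeff n \<mu> (vec_of_list (xs @ [1])))
      - (-1) ^ n * (\<Sum>xs\<in>compositions n. (-1::int) ^ length xs * pcoeff n \<mu> (vec_of_list xs))"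
    unfolding conj_hook_functional_def by (simp add: sum_distrib_left power_add mult.assoc)
  also have "\<dots> = (-1) ^ (n + 1) * ((-1) ^ (length \<mu> - 1) * int (count_list \<mu> 1)) - (-1) ^ n * (-1) ^ length \<mu>"
    using first second by simp
  also have "\<dots> = chi_conj_hook n \<mu>"
  proof -
    obtain k where k: "length \<mu> = Suc k" using L by (cases "length \<mu>") auto
    show ?thesis unfolding chi_conj_hook_def chi_hook_def k by (simp add: power_add algebra_simps)
  qed
  finally show ?thesis .
qed


lemma vec_of_list_Cons: "vec_of_list (x # xs) i = (if i = 0 then x else vec_of_list xs (i - 1))"
  unfolding vec_of_list_def by (cases i) auto

lemma vec_of_list_replicate_1: "vec_of_list (replicate m 1) i = (if i < m then 1 else 0)"
  unfolding vec_of_list_def by simp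

lemma is_column_vec_of_partition_iff:
  assumes \<nu>: "\<nu> \<in> partitions n"
  shows "is_column (vec_of_list \<nu>) \<longleftrightarrow> \<nu> = replicate n 1"
proof
  assume c: "is_column (vec_of_list \<nu>)"
  have ip: "is_partition n \<nu>" using \<nu> unfolding partitions_def by simp
  have "\<forall>y\<in>set \<nu>. y = 1"
  proof
    fix y assume "y \<in> set \<nu>"
    then obtain k where k: "k < length \<nu>" "\<nu> ! k = y" by (auto simp: in_set_conv_nth)
    have "vec_of_list \<nu> k \<le> 1" using c unfolding is_column_def by blast
    then have "y \<le> 1" using k by (simp add: vec_of_list_def)
    moreover have "0 < y" using ip \<open>y \<in> set \<nu>\<close> unfolding is_partition_def by auto
    ultimately show "y = 1" by simp
  qed
  then have r: "\<nu> = replicate (length \<nu>) 1" by (simp add: replicate_length_same)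
  have "sum_list (replicate (length \<nu>) (1::nat)) = length \<nu>" by (simp add: sum_list_replicate)
  then have "sum_list \<nu> = length \<nu>" using r by simp
  then have "length \<nu> = n" using ip unfolding is_partition_def by simp
  then show "\<nu> = replicate n 1" using r by simp
next
  assume "\<nu> = replicate n 1"
  then show "is_column (vec_of_list \<nu>)" unfolding is_column_def vec_of_list_def by simp
qed

lemma partition_hook_form:
  assumes \<nu>: "\<nu> \<in> partitions n" and second: "vec_of_list \<nu> 1 \<le> 1" and ne: "\<nu> \<noteq> []"
  shows "\<nu> = (n + 1 - length \<nu>) # replicate (length \<nu> - 1) 1"
proof -
  have ip: "is_partition n \<nu>" using \<nu> unfolding partitions_def by simp
  obtain x r where xr: "\<nu> = x # r" using ne by (cases \<nu>) auto
  have "y = 1" if y: "y \<in> set r" for y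
  proof -
    obtain k where k: "k < length r" "r ! k = y" using y by (auto simp: in_set_conv_nth)
    have "vec_of_list \<nu> (Suc k) \<le> vec_of_list \<nu> 1"
      using antimonoD[OF antimono_vec_of_partition[OF ip], of 1 "Suc k"] by simp
    then have "y \<le> 1" using second k unfolding xr vec_of_list_def by auto
    moreover have "0 < y" using ip y unfolding is_partition_def xr by auto
    ultimately show "y = 1" by simp
  qed
  then obtain k where r: "r = replicate k 1" by (metis replicate_length_same)
  then have "x + k = n" using ip unfolding is_partition_def xr by (simp add: sum_list_replicate)
  then show ?thesis using r xr by simp
qed

lemma horiz_strip_column_vec_partition_iff:
  assumes \<nu>: "\<nu> \<in> partitions n" and n: "2 \<le> n"
  shows "horiz_strip (column_vec (n - 1)) (vec_of_list \<nu>) \<longleftrightarrow> \<nu> = 2 # replicate (n - 2) 1 \<or> \<nu> = replicate n 1"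
proof -
  have ip: "is_partition n \<nu>" using \<nu> unfolding partitions_def by simp
  have dec: "\<forall>i. vec_of_list \<nu> (Suc i) \<le> vec_of_list \<nu> i"
    using is_shape_vec_of_partition[OF ip] unfolding is_shape_def by simp
  have len: "\<forall>i. 0 < vec_of_list \<nu> i \<longleftrightarrow> i < length \<nu>"
    using ip nth_mem[of _ \<nu>] unfolding is_partition_def vec_of_list_def by auto
  have "\<nu> \<noteq> []" using ip n unfolding is_partition_def by auto
  have "vec_of_list \<nu> 1 \<le> 1 \<and> (n - 1 = length \<nu> \<or> n = length \<nu>)
      \<longleftrightarrow> \<nu> = 2 # replicate (n - 2) 1 \<or> \<nu> = replicate n 1" (is "?L \<longleftrightarrow> ?R")
  proof
    assume L: ?L
    have form: "\<nu> = (n + 1 - length \<nu>) # replicate (length \<nu> - 1) 1"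
      using partition_hook_form[OF \<nu> _ \<open>\<nu> \<noteq> []\<close>] L by blast
    from L consider "length \<nu> = n - 1" | "length \<nu> = n" by linarith
    then show ?R
    proof cases
      case 1
      then have "n + 1 - length \<nu> = 2" "length \<nu> - 1 = n - 2" using n by auto
      then show ?thesis using form by simp
    next
      case 2
      have "replicate n (1::nat) = 1 # replicate (n - 1) 1" using n by (cases n) auto
      then show ?thesis using form 2 by simp
    qed
  next
    assume ?R
    then consider "\<nu> = 2 # replicate (n - 2) 1" | "\<nu> = replicate n 1" by blast
    then show ?L
    proof cases
      case 1
      moreover have "n - Suc 0 = Suc (n - 2)" using n by simp
      ultimately show ?thesis by (simp add: vec_of_list_def)
    next
      case 2
      then show ?thesis using n by (simp add: vec_of_list_def)
    qed
  qed
  moreover have "Suc (n - 1) = n" using n by simp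
  ultimately show ?thesis using horiz_strip_column_vec_iff[OF dec len, of "n - 1"] by (simp add: eq_commute)
qed

lemma alt_sum_kostka_snoc_1:
  assumes sh: "is_shape n lam" and szl: "psum n lam = n" and n: "2 \<le> n"
  shows "(\<Sum>xs\<in>compositions (n - 1). (-1::int) ^ length xs * int (kostka n lam (vec_of_list (xs @ [1]))))
      = (if horiz_strip (column_vec (n - 1)) lam then (-1) ^ (n - 1) else 0)"
proof -
  have HSc: "inner_strips n lam 1 \<inter> {\<rho>. is_column \<rho>} = (if horiz_strip (column_vec (n - 1)) lam then {column_vec (n - 1)} else {})"
  proof (rule set_eqI)
    fix \<rho>
    show "\<rho> \<in> inner_strips n lam 1 \<inter> {\<rho>. is_column \<rho>} \<longleftrightarrow> \<rho> \<in> (if horiz_strip (column_vec (n - 1)) lam then {column_vec (n - 1)} else {})"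
    proof
      assume h: "\<rho> \<in> inner_strips n lam 1 \<inter> {\<rho>. is_column \<rho>}"
      then have horiz_strip: "horiz_strip \<rho> lam" and s: "psum n \<rho> + 1 = n" and c: "is_column \<rho>" unfolding inner_strips_def using szl by auto
      have e: "psum n \<rho> = n - 1" using s by simp
      have "\<rho> = column_vec (psum n \<rho>)" by (rule is_column_eq_column_vec[OF horiz_strip_is_shape[OF horiz_strip sh] c])
      then have "\<rho> = column_vec (n - 1)" unfolding e .
      then show "\<rho> \<in> (if horiz_strip (column_vec (n - 1)) lam then {column_vec (n - 1)} else {})" using horiz_strip by simp
    next
      assume "\<rho> \<in> (if horiz_strip (column_vec (n - 1)) lam then {column_vec (n - 1)} else {})"
      then have e: "\<rho> = column_vec (n - 1)" and horiz_strip: "horiz_strip (column_vec (n - 1)) lam" by (auto split: if_splits)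
      have "psum n (column_vec (n - 1)) = n - 1" by (rule psum_column_vec) simp
      then show "\<rho> \<in> inner_strips n lam 1 \<inter> {\<rho>. is_column \<rho>}"
        using e horiz_strip n unfolding inner_strips_def is_column_def column_vec_def szl by auto
    qed
  qed
  have "(\<Sum>xs\<in>compositions (n - 1). (-1::int) ^ length xs * int (kostka n lam (vec_of_list (xs @ [1]))))
      = (\<Sum>xs\<in>compositions (n - 1). \<Sum>\<rho>\<in>inner_strips n lam 1. (-1::int) ^ length xs * int (kostka n \<rho> (vec_of_list xs)))"
  proof (rule sum.cong[OF refl])
    fix xs assume xs: "xs \<in> compositions (n - 1)"
    have "length xs < n" using compositions_length_le[OF xs] n by simp
    then show "(-1::int) ^ length xs * int (kostka n lam (vec_of_list (xs @ [1]))) = (\<Sum>\<rho>\<in>inner_strips n lam 1. (-1::int) ^ length xs * int (kostka n \<rho> (vec_of_list xs)))"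
      using kostka_snoc[OF sh, of xs 1] by (simp add: sum_distrib_left)
  qed
  also have "\<dots> = (\<Sum>\<rho>\<in>inner_strips n lam 1. \<Sum>xs\<in>compositions (n - 1). (-1::int) ^ length xs * int (kostka n \<rho> (vec_of_list xs)))"
    by (rule sum.swap)
  also have "\<dots> = (\<Sum>\<rho>\<in>inner_strips n lam 1. if is_column \<rho> then (-1) ^ (n - 1) else 0)"
  proof (rule sum.cong[OF refl])
    fix \<rho> assume r: "\<rho> \<in> inner_strips n lam 1"
    then have horiz_strip: "horiz_strip \<rho> lam" and s: "psum n \<rho> = n - 1" unfolding inner_strips_def szl by auto
    show "(\<Sum>xs\<in>compositions (n - 1). (-1::int) ^ length xs * int (kostka n \<rho> (vec_of_list xs))) = (if is_column \<rho> then (-1) ^ (n - 1) else 0)"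
      using alt_sum_kostka_compositions[OF horiz_strip_is_shape[OF horiz_strip sh]] s by simp
  qed
  also have "\<dots> = (\<Sum>\<rho>\<in>inner_strips n lam 1 \<inter> {\<rho>. is_column \<rho>}. (-1) ^ (n - 1))"
    using finite_inner_strips[OF sh] by (simp add: sum.If_cases)
  also have "\<dots> = (if horiz_strip (column_vec (n - 1)) lam then (-1) ^ (n - 1) else 0)"
    unfolding HSc by simp
  finally show ?thesis .
qed

lemma conj_hook_functional_scoeff:
  assumes \<nu>: "\<nu> \<in> partitions n" and n: "2 \<le> n"
  shows "conj_hook_functional n (scoeff n \<nu>) = (if \<nu> = 2 # replicate (n - 2) 1 then 1 else 0)"
proof -
  let ?l = "vec_of_list \<nu>"
  have sh: "is_shape n ?l" using \<nu> is_shape_vec_of_partition unfolding partitions_def by simp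
  have szl: "psum n ?l = n" using weak_comp_vec_of_partition[OF \<nu>] unfolding weak_comp_def by simp
  have second: "(\<Sum>xs\<in>compositions n. (-1::int) ^ length xs * int (kostka n ?l (vec_of_list xs))) = (if is_column ?l then (-1) ^ n else 0)"
    using alt_sum_kostka_compositions[OF sh] szl by simp
  have "conj_hook_functional n (scoeff n \<nu>) = (-1) ^ (n + 1) * (\<Sum>xs\<in>compositions (n - 1). (-1::int) ^ length xs * int (kostka n ?l (vec_of_list (xs @ [1]))))
      - (-1) ^ n * (\<Sum>xs\<in>compositions n. (-1::int) ^ length xs * int (kostka n ?l (vec_of_list xs)))"
    unfolding conj_hook_functional_def scoeff_eq_kostka by (simp add: sum_distrib_left power_add mult.assoc)
  also have "\<dots> = (if horiz_strip (column_vec (n - 1)) ?l then 1 else 0) - (if is_column ?l then 1 else 0)"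
  proof -
    obtain k where k: "n = Suc k" using n by (cases n) auto
    have a: "(-1::int) ^ (n + 1) * (-1) ^ (n - 1) = 1" unfolding k by (simp add: power_add[symmetric])
    have b: "(-1::int) ^ n * (-1) ^ n = 1" by (simp add: power_add[symmetric])
    show ?thesis unfolding alt_sum_kostka_snoc_1[OF sh szl n] second using a b by auto
  qed
  also have "\<dots> = (if \<nu> = 2 # replicate (n - 2) 1 then 1 else 0)"
  proof -
    have neq: "2 # replicate (n - 2) 1 \<noteq> replicate n (1::nat)" using n by (cases n) auto
    show ?thesis using horiz_strip_column_vec_partition_iff[OF \<nu> n] is_column_vec_of_partition_iff[OF \<nu>] neq by auto
  qed
  finally show ?thesis .
qed

lemma conj_hook_in_partitions: "2 \<le> n \<Longrightarrow> 2 # replicate (n - 2) 1 \<in> partitions n"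
  unfolding partitions_def is_partition_def by (simp add: sorted_append sum_list_replicate)

lemma schur_coeff_psi_conj_hook:
  assumes T: "T \<subseteq> partitions n" and n: "2 \<le> n"
  shows "schur_coeff n (psi n T) (2 # replicate (n - 2) 1) = (\<Sum>\<mu>\<in>T. chi_conj_hook n \<mu>)"
proof -
  have fT: "finite T" using finite_subset[OF T finite_partitions] .
  obtain c where c: "is_schur_expansion n (psi n T) c" using schur_expansion_exists[OF sym_hom_psi[OF T]] by blast
  have "schur_coeff n (psi n T) (2 # replicate (n - 2) 1) = c (2 # replicate (n - 2) 1)" unfolding schur_coeff_eqI[OF c] ..
  also have "\<dots> = conj_hook_functional n (psi n T)"
  proof -
    have "psi n T = (\<lambda>\<alpha>. \<Sum>\<nu>\<in>partitions n. c \<nu> * scoeff n \<nu> \<alpha>)" using c unfolding is_schur_expansion_def by auto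
    then have "conj_hook_functional n (psi n T) = (\<Sum>\<nu>\<in>partitions n. c \<nu> * conj_hook_functional n (scoeff n \<nu>))"
      using conj_hook_functional_lincomb[OF finite_partitions, of n c "scoeff n"] by simp
    also have "\<dots> = c (2 # replicate (n - 2) 1) * conj_hook_functional n (scoeff n (2 # replicate (n - 2) 1))"
      by (rule sum_eq_single[OF finite_partitions conj_hook_in_partitions[OF n]]) (use conj_hook_functional_scoeff n in auto)
    also have "\<dots> = c (2 # replicate (n - 2) 1)" using conj_hook_functional_scoeff[OF conj_hook_in_partitions[OF n] n] by simp
    finally show ?thesis by simp
  qed
  also have "conj_hook_functional n (psi n T) = (\<Sum>\<mu>\<in>T. 1 * conj_hook_functional n (pcoeff n \<mu>))"
    unfolding psi_def using conj_hook_functional_lincomb[OF fT, of n "\<lambda>_. 1" "pcoeff n"] by simp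
  also have "\<dots> = (\<Sum>\<mu>\<in>T. chi_conj_hook n \<mu>)"
    using conj_hook_functional_pcoeff T n by (intro sum.cong) auto
  finally show ?thesis .
qed



section \<open>Sign changes in the coefficient of \<open>s\<^sub>(\<^sub>2\<^sub>,\<^sub>1\<^sub>.\<^sub>.\<^sub>.\<^sub>,\<^sub>1\<^sub>)\<close>\<close>

lemma chi_conj_hook_column: "chi_conj_hook n (replicate n 1) = int n - 1"
  unfolding chi_conj_hook_def using chi_hook_column[of n] by (simp add: power_add[symmetric])

lemma chi_conj_hook_Cons_replicate:
  "x \<noteq> 1 \<Longrightarrow> chi_conj_hook n (x # replicate m 1) = (-1) ^ (n + Suc m) * (int m - 1)"
  unfolding chi_conj_hook_def chi_hook_def by (simp add: count_list_eq_length_filter filter_replicate)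

lemma chi_conj_hook_3_2_replicate:
  "chi_conj_hook n (3 # 2 # replicate m 1) = (-1) ^ (n + Suc (Suc m)) * (int m - 1)"
  unfolding chi_conj_hook_def chi_hook_def by (simp add: count_list_eq_length_filter filter_replicate)

lemma sum_list_le_sum_set_nonpos:
  assumes "\<And>x. g x \<le> (0::int)"
  shows "sum_list (map g xs) \<le> sum g (set xs)"
proof (induction xs)
  case (Cons x xs)
  then show ?case using assms[of x] by (cases "x \<in> set xs") (simp_all add: insert_absorb)
qed simp

lemma chi_conj_hook_negative_part_small:
  assumes "2 \<le> n" "n \<le> 5"
  shows "- (int n - 1) \<le> sum_list (map (\<lambda>\<mu>. min (chi_conj_hook n \<mu>) 0) (part_enum n n))"
proof -
  consider "n = 2" | "n = 3" | "n = 4" | "n = 5" using assms by linarith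
  then show ?thesis
    by cases (simp_all add: part_enum_numeral part_enum_1 part_enum_0 part_enum_Suc upt_rec
        chi_conj_hook_def chi_hook_def)
qed

lemma conj_hook_sum_nonneg_small:
  assumes T: "T \<subseteq> partitions n" "replicate n 1 \<in> T" and n: "2 \<le> n" "n \<le> 5"
  shows "0 \<le> (\<Sum>\<mu>\<in>T. chi_conj_hook n \<mu>)"
proof -
  let ?r = "replicate n (1::nat)"
  let ?g = "\<lambda>\<mu>. min (chi_conj_hook n \<mu>) 0"
  have fT: "finite T" using finite_subset[OF T(1) finite_partitions] .
  have "T - {?r} \<subseteq> set (part_enum n n)"
    using T(1) part_enum_complete is_partition_part_le unfolding partitions_def by blast
  then have "(\<Sum>\<mu>\<in>set (part_enum n n). ?g \<mu>)
      = (\<Sum>\<mu>\<in>T - {?r}. ?g \<mu>) + (\<Sum>\<mu>\<in>set (part_enum n n) - (T - {?r}). ?g \<mu>)"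
    by (simp add: sum.subset_diff)
  moreover have "(\<Sum>\<mu>\<in>set (part_enum n n) - (T - {?r}). ?g \<mu>) \<le> 0" by (rule sum_nonpos) simp
  moreover have "(\<Sum>\<mu>\<in>T - {?r}. ?g \<mu>) \<le> (\<Sum>\<mu>\<in>T - {?r}. chi_conj_hook n \<mu>)" by (rule sum_mono) simp
  moreover have "(\<Sum>\<mu>\<in>T. chi_conj_hook n \<mu>) = (int n - 1) + (\<Sum>\<mu>\<in>T - {?r}. chi_conj_hook n \<mu>)"
    using sum.remove[OF fT T(2), of "chi_conj_hook n"] chi_conj_hook_column[of n] by simp
  ultimately show ?thesis
    using sum_list_le_sum_set_nonpos[of ?g "part_enum n n"] chi_conj_hook_negative_part_small[OF n]
    by linarith
qed

lemma Cons_in_partitions: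
  assumes "2 \<le> x" "\<forall>y\<in>set r. y \<le> x" "sorted (rev r)" "\<forall>y\<in>set r. 0 < y" "x + sum_list r = n"
  shows "x # r \<in> partitions n"
  using assms unfolding partitions_def is_partition_def by (auto simp: sorted_append)

text \<open>
  For \<open>n \<ge> 7\<close> the partitions \<open>(2,1\<^sup>n\<^sup>-\<^sup>2)\<close>, \<open>(4,1\<^sup>n\<^sup>-\<^sup>4)\<close>, \<open>(3,2,1\<^sup>n\<^sup>-\<^sup>5)\<close> contribute
  \<open>-(n-3) - (n-5) - (n-6) < -(n-1)\<close>.
\<close>

lemma conj_hook_sum_negative_large:
  assumes n: "6 \<le> n"
  shows "\<exists>T. T \<subseteq> partitions n \<and> replicate n 1 \<in> T \<and> (\<Sum>\<mu>\<in>T. chi_conj_hook n \<mu>) < 0"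
proof (cases "n = 6")
  case True
  let ?T = "{replicate 6 1, [2, 1, 1, 1, 1], [4, 1, 1], [3, 3], [4, 2]} :: nat list set"
  have "?T \<subseteq> partitions 6" unfolding partitions_def is_partition_def by (auto simp: numeral_eq_Suc)
  moreover have "(\<Sum>\<mu>\<in>?T. chi_conj_hook 6 \<mu>) < 0"
    by (simp add: chi_conj_hook_def chi_hook_def numeral_eq_Suc)
  ultimately show ?thesis using True by blast
next
  case False
  then obtain k where k: "n = k + 7" using n by (metis add.commute le_Suc_ex le_neq_implies_less Suc_leI
      numeral_eq_Suc pred_numeral_simps)
  let ?r = "replicate n (1::nat)"
  let ?A = "2 # replicate (n - 2) (1::nat)"
  let ?B = "4 # replicate (n - 4) (1::nat)"
  let ?C = "3 # 2 # replicate (n - 5) (1::nat)"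
  have hd_r: "hd ?r = 1" using n by (cases n) auto
  then have distinct: "?r \<notin> {?A, ?B, ?C}" "?A \<notin> {?B, ?C}" "?B \<notin> {?C}" by auto
  have "?B \<in> partitions n" by (rule Cons_in_partitions) (use n in \<open>auto simp: sum_list_replicate\<close>)
  moreover have "?C \<in> partitions n"
    by (rule Cons_in_partitions) (use n in \<open>auto simp: sum_list_replicate sorted_append\<close>)
  ultimately have sub: "{?r, ?A, ?B, ?C} \<subseteq> partitions n"
    using column_in_partitions conj_hook_in_partitions n by auto
  have "chi_conj_hook n ?A = - (int k + 4)"
    using chi_conj_hook_Cons_replicate[of 2 n "n - 2"] unfolding k by (simp add: power_add)
  moreover have "chi_conj_hook n ?B = - (int k + 2)"
    using chi_conj_hook_Cons_replicate[of 4 n "n - 4"] unfolding k by (simp add: power_add)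
  moreover have "chi_conj_hook n ?C = - (int k + 1)"
    using chi_conj_hook_3_2_replicate[of n "n - 5"] unfolding k by (simp add: power_add)
  moreover have "chi_conj_hook n ?r = int k + 6" using chi_conj_hook_column[of n] unfolding k by simp
  ultimately have "(\<Sum>\<mu>\<in>{?r, ?A, ?B, ?C}. chi_conj_hook n \<mu>) < 0" using distinct by simp
  then show ?thesis using sub by blast
qed

lemma conj_hook_coeff_negative_iff:
  assumes n: "2 \<le> n"
  shows "(\<exists>T. T \<subseteq> partitions n \<and> replicate n 1 \<in> T \<and> schur_coeff n (psi n T) (2 # replicate (n - 2) 1) < 0)
    \<longleftrightarrow> 6 \<le> n"
proof
  assume "\<exists>T. T \<subseteq> partitions n \<and> replicate n 1 \<in> T \<and> schur_coeff n (psi n T) (2 # replicate (n - 2) 1) < 0"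
  then obtain T where T: "T \<subseteq> partitions n" "replicate n 1 \<in> T"
    "schur_coeff n (psi n T) (2 # replicate (n - 2) 1) < 0" by blast
  show "6 \<le> n"
  proof (rule ccontr)
    assume "\<not> 6 \<le> n"
    then have "0 \<le> (\<Sum>\<mu>\<in>T. chi_conj_hook n \<mu>)" using conj_hook_sum_nonneg_small[OF T(1,2) n] by simp
    then show False using T(3) schur_coeff_psi_conj_hook[OF T(1) n] by simp
  qed
next
  assume "6 \<le> n"
  then obtain T where T: "T \<subseteq> partitions n" "replicate n 1 \<in> T" "(\<Sum>\<mu>\<in>T. chi_conj_hook n \<mu>) < 0"
    using conj_hook_sum_negative_large by blast
  then have "schur_coeff n (psi n T) (2 # replicate (n - 2) 1) < 0"
    using schur_coeff_psi_conj_hook[OF T(1) n] by simp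
  then show "\<exists>T. T \<subseteq> partitions n \<and> replicate n 1 \<in> T \<and> schur_coeff n (psi n T) (2 # replicate (n - 2) 1) < 0"
    using T by blast
qed

theorem proposition4p2:
  fixes n :: nat
  assumes "2 \<le> n"
  shows "((\<exists>T. T \<subseteq> partitions n \<and> replicate n 1 \<in> T \<and>
             schur_coeff n (psi n T) [n - 1, 1] < 0) \<longleftrightarrow> 10 \<le> n) \<and>
         ((\<exists>T. T \<subseteq> partitions n \<and> replicate n 1 \<in> T \<and>
             schur_coeff n (psi n T) (2 # replicate (n - 2) 1) < 0) \<longleftrightarrow> 6 \<le> n)"
  using hook_coeff_negative_iff[OF assms] conj_hook_coeff_negative_iff[OF assms] by blast

end
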